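(* Let $X$ be a finite set with $d=|X|\ge2$ and let $U$ be a clopen subset of $X^\omega$. If $U=\bigsqcup_{i=1}^n v_iX^\omega$ with $v_i\in X^*$, then the residue of $n$ modulo $d-1$ does not depend on the decomposition; denote it $m(U)\in\mathbb{Z}/(d-1)\mathbb{Z}$. For non-empty proper clopen subsets $U_1,U_2\subset X^\omega$ the following are equivalent: (1) $U_1,U_2$ lie in one $\mathcal{V}_X$-orbit; (2) $U_1,U_2$ lie in one $\mathcal{V}_X'$-orbit; (3) $m(U_1)=m(U_2)$.
   Context: $X^*$ is the set of finite words over $X$, $X^\omega$ the space of right-infinite sequences with the product topology, $vX^\omega$ the set of sequences beginning with $v$. A complete antichain is a finite set $A\subset X^*$ of words, none a prefix of another, with $X^\omega=\bigsqcup_{v\in A}vX^\omega$. The Higman–Thompson group $\mathcal{V}_X$ is the group of homeomorphisms $g$ of $X^\omega$ for which there are complete antichains $A_1,A_2$ and a bijection $\alpha:A_1\to A_2$ with $g(vw)=\alpha(v)w$ for all $v\in A_1$, $w\in X^\omega$. $\mathcal{V}_X'$ is its commutator subgroup. *)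

theory Defs
  imports "HOL-Analysis.Analysis" "HOL-Algebra.Generated_Groups" "HOL-Number_Theory.Cong"
begin

definition cantor_top :: "'a set \<Rightarrow> (nat \<Rightarrow> 'a) topology" where
  "cantor_top X = product_topology (\<lambda>_::nat. discrete_topology X) UNIV"

definition clopen_in :: "'a set \<Rightarrow> (nat \<Rightarrow> 'a) set \<Rightarrow> bool" where
  "clopen_in X U \<longleftrightarrow> openin (cantor_top X) U \<and> closedin (cantor_top X) U"

definition conc :: "'a list \<Rightarrow> (nat \<Rightarrow> 'a) \<Rightarrow> (nat \<Rightarrow> 'a)" where
  "conc v w = (\<lambda>i. if i < length v then v ! i else w (i - length v))"

definition cyl :: "'a set \<Rightarrow> 'a list \<Rightarrow> (nat \<Rightarrow> 'a) set" where
  "cyl X v = {conc v w | w. w \<in> topspace (cantor_top X)}"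

definition complete_antichain :: "'a set \<Rightarrow> 'a list set \<Rightarrow> bool" where
  "complete_antichain X A \<longleftrightarrow>
     finite A \<and> A \<subseteq> lists X \<and>
     (\<forall>u\<in>A. \<forall>v\<in>A. u \<noteq> v \<longrightarrow> \<not> (\<exists>w. v = u @ w)) \<and>
     (\<Union>v\<in>A. cyl X v) = topspace (cantor_top X) \<and>
     disjoint_family_on (cyl X) A"

text \<open>Higman--Thompson group; elements are homeomorphisms of X^omega, extended by the
  identity outside X^omega so that composition and inversion are the group operations.\<close>
definition HT :: "'a set \<Rightarrow> ((nat \<Rightarrow> 'a) \<Rightarrow> (nat \<Rightarrow> 'a)) set" where
  "HT X = {g. homeomorphic_map (cantor_top X) (cantor_top X) g \<and>
              (\<forall>x. x \<notin> topspace (cantor_top X) \<longrightarrow> g x = x) \<and>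
              (\<exists>A1 A2 \<alpha>. complete_antichain X A1 \<and> complete_antichain X A2 \<and>
                  bij_betw \<alpha> A1 A2 \<and>
                  (\<forall>v\<in>A1. \<forall>w\<in>topspace (cantor_top X). g (conc v w) = conc (\<alpha> v) w))}"

definition HT_group :: "'a set \<Rightarrow> ((nat \<Rightarrow> 'a) \<Rightarrow> (nat \<Rightarrow> 'a)) monoid" where
  "HT_group X = \<lparr>carrier = HT X, mult = (\<circ>), one = id\<rparr>"

definition HT_comm :: "'a set \<Rightarrow> ((nat \<Rightarrow> 'a) \<Rightarrow> (nat \<Rightarrow> 'a)) set" where
  "HT_comm X = derived (HT_group X) (HT X)"

definition same_orbit :: "(('b \<Rightarrow> 'b) set) \<Rightarrow> 'b set \<Rightarrow> 'b set \<Rightarrow> bool" where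
  "same_orbit G U1 U2 \<longleftrightarrow> (\<exists>g\<in>G. g ` U1 = U2)"

definition decomp :: "'a set \<Rightarrow> (nat \<Rightarrow> 'a) set \<Rightarrow> 'a list list \<Rightarrow> bool" where
  "decomp X U vs \<longleftrightarrow> set vs \<subseteq> lists X \<and>
     (\<forall>i<length vs. \<forall>j<length vs. i \<noteq> j \<longrightarrow> cyl X (vs ! i) \<inter> cyl X (vs ! j) = {}) \<and>
     (\<Union>i<length vs. cyl X (vs ! i)) = U"

definition mres :: "'a set \<Rightarrow> (nat \<Rightarrow> 'a) set \<Rightarrow> nat" where
  "mres X U = (THE r. \<exists>vs. decomp X U vs \<and> r = length vs mod (card X - 1))"

end

theory Submission
  imports Defs "HOL-Combinatorics.Permutations"
begin

text \<open>Refining a cylinder \<open>vX\<^sup>\<omega>\<close> into \<open>vxX\<^sup>\<omega>\<close>, \<open>x \<in> X\<close>, adds \<open>d - 1\<close> cylinders, and any two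
  decompositions of \<open>U\<close> refine to the decomposition into all cylinders of one large depth; so the
  number of cylinders is well defined modulo \<open>d - 1\<close>. An element of \<open>\<V>\<^sub>X\<close> replaces prefixes below some
  depth, so it maps a decomposition of \<open>U\<close> that deep to a decomposition of \<open>gU\<close> with as many
  cylinders: \<open>m\<close> is \<open>\<V>\<^sub>X\<close>-invariant. Conversely, write \<open>U\<^sub>1\<close> and \<open>U\<^sub>2\<close> as unions of cylinders of a
  common depth. Commutators of transpositions of words give all 3-cycles, which move any set of
  words to any other of the same size; and commuting the map that collapses \<open>paaX\<^sup>\<omega>\<close> onto \<open>paX\<^sup>\<omega>\<close>
  with the swap of \<open>pX\<^sup>\<omega>\<close> and \<open>qX\<^sup>\<omega>\<close> adds \<open>d - 1\<close> cylinders. So clopen sets with equal \<open>m\<close> lie in one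
  \<open>\<V>\<^sub>X'\<close>-orbit.\<close>

section \<open>Words, prefixes and cylinders\<close>

abbreviation cantor_space :: "'a set \<Rightarrow> (nat \<Rightarrow> 'a) set" where
  "cantor_space X \<equiv> topspace (cantor_top X)"

lemma cantor_space_eq: "cantor_space X = {x. \<forall>i. x i \<in> X}"
  by (auto simp: cantor_top_def topspace_product_topology PiE_def extensional_def)

lemma cantor_space_nonempty:
  assumes "X \<noteq> {}" obtains w where "w \<in> cantor_space X"
proof -
  from assms obtain z where "z \<in> X" by blast
  then show thesis using that[of "\<lambda>_. z"] by (simp add: cantor_space_eq)
qed

definition seq_take :: "nat \<Rightarrow> (nat \<Rightarrow> 'a) \<Rightarrow> 'a list" where
  "seq_take n x = map x [0..<n]"

definition seq_drop :: "nat \<Rightarrow> (nat \<Rightarrow> 'a) \<Rightarrow> (nat \<Rightarrow> 'a)" where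
  "seq_drop n x = (\<lambda>i. x (i + n))"

lemma length_seq_take [simp]: "length (seq_take n x) = n"
  by (simp add: seq_take_def)

lemma nth_seq_take [simp]: "i < n \<Longrightarrow> seq_take n x ! i = x i"
  by (simp add: seq_take_def)

lemma conc_seq_take_seq_drop [simp]: "conc (seq_take n x) (seq_drop n x) = x"
  by (auto simp: conc_def seq_drop_def fun_eq_iff)

lemma seq_drop_conc [simp]: "length v = n \<Longrightarrow> seq_drop n (conc v w) = w"
  by (auto simp: conc_def seq_drop_def fun_eq_iff)

lemma seq_take_conc [simp]: "length v = n \<Longrightarrow> seq_take n (conc v w) = v"
  by (auto simp: conc_def intro!: nth_equalityI)

lemma seq_take_conc_le: "n \<le> length v \<Longrightarrow> seq_take n (conc v w) = take n v"
  by (auto simp: conc_def intro!: nth_equalityI)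

lemma take_seq_take: "m \<le> n \<Longrightarrow> take m (seq_take n x) = seq_take m x"
  by (auto intro!: nth_equalityI)

lemma seq_take_seq_drop: "seq_take n (seq_drop m x) = drop m (seq_take (m + n) x)"
  by (auto simp: seq_drop_def add.commute intro!: nth_equalityI)

lemma seq_take_conc_cong:
  assumes "seq_take n s = seq_take n s'" shows "seq_take n (conc a s) = seq_take n (conc a s')"
proof (intro nth_equalityI)
  fix i assume "i < length (seq_take n (conc a s))"
  then have i: "i < n" by simp
  then have "s (i - length a) = s' (i - length a)"
    using assms by (metis diff_le_self le_less_trans nth_seq_take)
  then show "seq_take n (conc a s) ! i = seq_take n (conc a s') ! i"
    using i by (simp add: conc_def)
qed simp

lemma conc_Nil [simp]: "conc [] w = w"
  by (simp add: conc_def)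

lemma conc_append: "conc (u @ v) w = conc u (conc v w)"
  by (auto simp: conc_def fun_eq_iff nth_append)

lemma conc_Cons: "conc (z # v) w = (\<lambda>i. if i = 0 then z else conc v w (i - 1))"
  by (auto simp: conc_def fun_eq_iff nth_Cons')

lemma conc_eq_conc_iff: "length v = length v' \<Longrightarrow> conc v w = conc v' w' \<longleftrightarrow> v = v' \<and> w = w'"
  by (metis seq_drop_conc seq_take_conc)

lemma conc_take_conc_drop: "conc (take n v) (conc (drop n v) w) = conc v w"
  by (simp flip: conc_append)

lemma conc_in_cantor_space_iff [simp]:
  "conc v w \<in> cantor_space X \<longleftrightarrow> set v \<subseteq> X \<and> w \<in> cantor_space X"
proof -
  have "(\<forall>i. conc v w i \<in> X) \<longleftrightarrow> (\<forall>i<length v. v ! i \<in> X) \<and> (\<forall>i. w i \<in> X)"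
    by (auto simp: conc_def) (metis add_diff_cancel_right' not_add_less2)
  then show ?thesis
    by (simp add: cantor_space_eq all_set_conv_all_nth subset_code(1))
qed

lemma set_seq_take_subset: "x \<in> cantor_space X \<Longrightarrow> set (seq_take n x) \<subseteq> X"
  by (auto simp: cantor_space_eq seq_take_def)

lemma seq_drop_in_cantor_space: "x \<in> cantor_space X \<Longrightarrow> seq_drop n x \<in> cantor_space X"
  by (auto simp: cantor_space_eq seq_drop_def)

lemma conc_seq_head: "conc [w 0] (seq_drop 1 w) = w"
  by (auto simp: conc_Cons seq_drop_def fun_eq_iff)

lemma cyl_eq:
  assumes "set v \<subseteq> X" shows "cyl X v = {x \<in> cantor_space X. seq_take (length v) x = v}"
proof (intro equalityI subsetI)
  fix x assume "x \<in> {x \<in> cantor_space X. seq_take (length v) x = v}"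
  then show "x \<in> cyl X v"
    using conc_seq_take_seq_drop[of "length v" x] seq_drop_in_cantor_space[of x X "length v"]
    by (auto simp: cyl_def intro!: exI[of _ "seq_drop (length v) x"])
qed (use assms in \<open>auto simp: cyl_def\<close>)

lemma conc_in_cyl: "w \<in> cantor_space X \<Longrightarrow> conc v w \<in> cyl X v"
  by (auto simp: cyl_def)

lemma cyl_subset_cantor_space: "set v \<subseteq> X \<Longrightarrow> cyl X v \<subseteq> cantor_space X"
  by (auto simp: cyl_def)

lemma cyl_nonempty: "X \<noteq> {} \<Longrightarrow> set v \<subseteq> X \<Longrightarrow> cyl X v \<noteq> {}"
  by (metis cantor_space_nonempty conc_in_cyl empty_iff)

lemma cyl_append_subset: "set u \<subseteq> X \<Longrightarrow> cyl X (v @ u) \<subseteq> cyl X v"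
  by (auto simp: cyl_def conc_append)

lemma disjoint_cyl: "length u = length v \<Longrightarrow> u \<noteq> v \<Longrightarrow> cyl X u \<inter> cyl X v = {}"
  by (auto simp: cyl_def conc_eq_conc_iff)

lemma image_cyl:
  assumes "\<forall>w\<in>cantor_space X. g (conc v w) = conc a w"
  shows "g ` cyl X v = cyl X a"
  using assms unfolding cyl_def by force

lemma cyl_eq_UN_snoc:
  assumes "set v \<subseteq> X" shows "cyl X v = (\<Union>z\<in>X. cyl X (v @ [z]))"
proof (intro equalityI subsetI)
  fix x assume "x \<in> cyl X v"
  then obtain w where w: "w \<in> cantor_space X" "x = conc v w" by (auto simp: cyl_def)
  then have "x = conc (v @ [w 0]) (seq_drop 1 w)" "w 0 \<in> X"
    by (simp_all only: conc_append conc_seq_head) (simp add: cantor_space_eq)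
  with w(1) show "x \<in> (\<Union>z\<in>X. cyl X (v @ [z]))"
    by (auto intro: conc_in_cyl seq_drop_in_cantor_space)
qed (auto simp: cyl_def conc_append)

definition words :: "'a set \<Rightarrow> nat \<Rightarrow> 'a list set" where
  "words X n = {w. set w \<subseteq> X \<and> length w = n}"

lemma in_words_iff: "v \<in> words X n \<longleftrightarrow> set v \<subseteq> X \<and> length v = n"
  by (simp add: words_def)

lemma finite_words: "finite X \<Longrightarrow> finite (words X n)"
  unfolding words_def by (rule finite_lists_length_eq)

lemma card_words: "finite X \<Longrightarrow> card (words X n) = card X ^ n"
  unfolding words_def by (rule card_lists_length_eq)

lemma subset_words_iff: "S \<subseteq> words X n \<longleftrightarrow> (\<forall>v\<in>S. set v \<subseteq> X \<and> length v = n)"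
  by (simp add: subset_eq in_words_iff)

lemma finite_subset_words: "finite X \<Longrightarrow> S \<subseteq> words X n \<Longrightarrow> finite S"
  using finite_words finite_subset by blast

lemma three_le_card_words:
  assumes "finite X" and d: "2 \<le> card X" and "2 \<le> n" shows "3 \<le> card (words X n)"
proof -
  have "card X ^ 2 \<le> card X ^ n" using d assms(3) by (intro power_increasing) auto
  moreover have "2 ^ 2 \<le> card X ^ 2" using d by (rule power_mono) simp
  ultimately show ?thesis using card_words[OF assms(1)] by simp
qed

lemma seq_take_in_words: "x \<in> cantor_space X \<Longrightarrow> seq_take n x \<in> words X n"
  by (simp add: in_words_iff set_seq_take_subset)

lemma take_in_words: "v \<in> words X (n + k) \<Longrightarrow> take n v \<in> words X n"
  by (auto simp: in_words_iff dest: in_set_takeD)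

lemma drop_in_words: "v \<in> words X (n + k) \<Longrightarrow> drop n v \<in> words X k"
  by (auto simp: in_words_iff dest: in_set_dropD)

lemma cyl_seq_take:
  "x \<in> cantor_space X \<Longrightarrow> cyl X (seq_take n x) = {y \<in> cantor_space X. seq_take n y = seq_take n x}"
  by (simp add: cyl_eq set_seq_take_subset)

definition cylset :: "'a set \<Rightarrow> nat \<Rightarrow> 'a list set \<Rightarrow> (nat \<Rightarrow> 'a) set" where
  "cylset X n S = {x \<in> cantor_space X. seq_take n x \<in> S}"

lemma cylset_eq_UN:
  assumes "S \<subseteq> words X n" shows "cylset X n S = (\<Union>v\<in>S. cyl X v)"
proof -
  have "cyl X v = {x \<in> cantor_space X. seq_take n x = v}" if "v \<in> S" for v
    using that assms cyl_eq[of v X] by (auto simp: in_words_iff)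
  then show ?thesis by (auto simp: cylset_def)
qed

lemma cylset_Un: "cylset X n (S \<union> T) = cylset X n S \<union> cylset X n T"
  by (auto simp: cylset_def)

lemma cylset_words: "cylset X n (words X n) = cantor_space X"
  by (auto simp: cylset_def seq_take_in_words)

lemma cylset_mono_iff:
  assumes "X \<noteq> {}" and "S \<subseteq> words X n"
  shows "cylset X n S \<subseteq> cylset X n S' \<longleftrightarrow> S \<subseteq> S'"
proof
  assume sub: "cylset X n S \<subseteq> cylset X n S'"
  obtain w where w: "w \<in> cantor_space X" using cantor_space_nonempty[OF assms(1)] .
  show "S \<subseteq> S'"
  proof
    fix v assume "v \<in> S"
    moreover have v: "set v \<subseteq> X" "length v = n" using subsetD[OF assms(2) \<open>v \<in> S\<close>] by (simp_all add: in_words_iff)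
    ultimately have "conc v w \<in> cylset X n S" using w by (simp add: cylset_def)
    then have "conc v w \<in> cylset X n S'" using sub by blast
    then show "v \<in> S'" using v by (simp add: cylset_def)
  qed
qed (auto simp: cylset_def)

lemma cylset_inject:
  assumes "X \<noteq> {}" and "S \<subseteq> words X n" and "S' \<subseteq> words X n"
  shows "cylset X n S = cylset X n S' \<longleftrightarrow> S = S'"
  using cylset_mono_iff[OF assms(1,2)] cylset_mono_iff[OF assms(1,3)] by blast

lemma cylset_snoc_image:
  assumes "set v \<subseteq> X" and "length v = k" 
  shows "cylset X (Suc k) ((\<lambda>z. v @ [z]) ` X) = cyl X v"
proof -
  have "(\<lambda>z. v @ [z]) ` X \<subseteq> words X (Suc k)" using assms by (auto simp: in_words_iff)
  then show ?thesis using cyl_eq_UN_snoc[OF assms(1)] by (simp add: cylset_eq_UN)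
qed

definition extend_words :: "'a set \<Rightarrow> nat \<Rightarrow> nat \<Rightarrow> 'a list set \<Rightarrow> 'a list set" where
  "extend_words X n k S = {w \<in> words X (n + k). take n w \<in> S}"

lemma extend_words_subset: "extend_words X n k S \<subseteq> words X (n + k)"
  by (auto simp: extend_words_def)

lemma cylset_extend_words: "cylset X (n + k) (extend_words X n k S) = cylset X n S"
  by (auto simp: cylset_def extend_words_def take_seq_take seq_take_in_words)

lemma card_extend_words:
  assumes "finite X" and S: "S \<subseteq> words X n"
  shows "card (extend_words X n k S) = card S * card X ^ k"
proof -
  have "extend_words X n k S = (\<lambda>(v, u). v @ u) ` (S \<times> words X k)"
  proof (intro equalityI subsetI)
    fix w assume "w \<in> extend_words X n k S"
    then have "(take n w, drop n w) \<in> S \<times> words X k"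
      by (auto simp: extend_words_def in_words_iff dest: in_set_dropD)
    then show "w \<in> (\<lambda>(v, u). v @ u) ` (S \<times> words X k)"
      by (force intro: image_eqI[where x = "(take n w, drop n w)"])
  next
    fix w assume "w \<in> (\<lambda>(v, u). v @ u) ` (S \<times> words X k)"
    then obtain v u where "w = v @ u" "v \<in> S" "u \<in> words X k" by auto
    moreover have "v \<in> words X n" using S \<open>v \<in> S\<close> by blast
    ultimately show "w \<in> extend_words X n k S" by (auto simp: extend_words_def in_words_iff)
  qed
  moreover have "inj_on (\<lambda>(v, u). v @ u) (S \<times> words X k)"
    using S by (auto simp: inj_on_def in_words_iff)
  moreover have "finite S"
    using S finite_words[OF \<open>finite X\<close>] by (rule finite_subset)
  ultimately show ?thesis
    by (simp add: card_image card_cartesian_product card_words[OF \<open>finite X\<close>])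
qed

section \<open>Clopen subsets of the Cantor space\<close>

lemma openin_cantor_top_cyl:
  assumes U: "openin (cantor_top X) U" and "x \<in> U"
  obtains n where "cyl X (seq_take n x) \<subseteq> U"
proof -
  obtain V where V: "finite {i. V i \<noteq> X}" "x \<in> Pi\<^sub>E UNIV V" "Pi\<^sub>E UNIV V \<subseteq> U"
    using U \<open>x \<in> U\<close> unfolding cantor_top_def openin_product_topology_alt by auto
  obtain n where n: "{i. V i \<noteq> X} \<subseteq> {..<n}"
    using finite_nat_bounded[OF V(1)] by blast
  have "y \<in> Pi\<^sub>E UNIV V" if "y \<in> cantor_space X" "seq_take n y = seq_take n x" for y
  proof -
    have "y i \<in> V i" for i
    proof (cases "i < n")
      case True
      then have "y i = x i" using nth_seq_take that(2) by metis
      then show ?thesis using V(2) by auto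
    next
      case False
      then show ?thesis using n that(1) by (auto simp: cantor_space_eq)
    qed
    then show ?thesis by (simp add: PiE_UNIV_domain)
  qed
  moreover have "x \<in> cantor_space X" using U \<open>x \<in> U\<close> openin_subset by blast
  ultimately have "cyl X (seq_take n x) \<subseteq> U" using V(3) by (simp add: cyl_seq_take) blast
  then show thesis by (rule that)
qed

lemma openin_cantor_topI:
  assumes U: "U \<subseteq> cantor_space X" and cyl: "\<And>x. x \<in> U \<Longrightarrow> \<exists>n. cyl X (seq_take n x) \<subseteq> U"
  shows "openin (cantor_top X) U"
  unfolding cantor_top_def openin_product_topology_alt
proof (intro ballI)
  fix x assume "x \<in> U"
  then obtain n where n: "cyl X (seq_take n x) \<subseteq> U" using cyl by blast
  have x: "x \<in> cantor_space X" using U \<open>x \<in> U\<close> by blast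
  define V where "V i = (if i < n then {x i} else X)" for i
  have "Pi\<^sub>E UNIV V \<subseteq> cyl X (seq_take n x)"
  proof
    fix y assume "y \<in> Pi\<^sub>E UNIV V"
    then have y: "y i \<in> V i" for i by auto
    have "y i \<in> X" for i using y[of i] x by (auto simp: V_def cantor_space_eq split: if_splits)
    moreover have "y i = x i" if "i < n" for i using y[of i] that by (simp add: V_def)
    then have "seq_take n y = seq_take n x" by (intro nth_equalityI) auto
    ultimately have "y \<in> cantor_space X" "seq_take n y = seq_take n x"
      by (auto simp: cantor_space_eq)
    then show "y \<in> cyl X (seq_take n x)" using cyl_seq_take[OF x] by blast
  qed
  moreover have "finite {i. V i \<noteq> X}"
    by (rule finite_subset[of _ "{..<n}"]) (auto simp: V_def)
  ultimately show "\<exists>V. finite {i \<in> UNIV. V i \<noteq> topspace (discrete_topology X)} \<and>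
      (\<forall>i\<in>UNIV. openin (discrete_topology X) (V i)) \<and> x \<in> Pi\<^sub>E UNIV V \<and> Pi\<^sub>E UNIV V \<subseteq> U"
    using n x by (intro exI[of _ V]) (auto simp: V_def cantor_space_eq)
qed

lemma openin_cantor_top_iff:
  "openin (cantor_top X) U \<longleftrightarrow> U \<subseteq> cantor_space X \<and> (\<forall>x\<in>U. \<exists>n. cyl X (seq_take n x) \<subseteq> U)"
  by (meson openin_cantor_topI openin_cantor_top_cyl openin_subset)

text \<open>Every point has a cylinder neighbourhood inside \<open>U\<close> or inside its complement, and compactness
  bounds the depths needed.\<close>

lemma clopen_in_eq_cylset:
  assumes "finite X" and "clopen_in X U"
  obtains n S where "S \<subseteq> words X n" and "U = cylset X n S"
proof -
  have U: "openin (cantor_top X) U" "openin (cantor_top X) (cantor_space X - U)"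
    using assms(2) by (auto simp: clopen_in_def closedin_def)
  have "\<exists>n. cyl X (seq_take n x) \<subseteq> U \<or> cyl X (seq_take n x) \<subseteq> cantor_space X - U"
    if "x \<in> cantor_space X" for x
    using that U unfolding openin_cantor_top_iff by (cases "x \<in> U") blast+
  then obtain depth where depth: "\<And>x. x \<in> cantor_space X \<Longrightarrow>
      cyl X (seq_take (depth x) x) \<subseteq> U \<or> cyl X (seq_take (depth x) x) \<subseteq> cantor_space X - U"
    by metis
  define C where "C x = cyl X (seq_take (depth x) x)" for x
  have "openin (cantor_top X) (C x)" if "x \<in> cantor_space X" for x
    unfolding openin_cantor_top_iff C_def
    using that by (auto simp: cyl_seq_take take_seq_take intro!: exI[of _ "depth x"])
  moreover have "compact_space (cantor_top X)"
    using assms(1) by (simp add: cantor_top_def compact_space_product_topology compact_space_discrete_topology)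
  moreover have "cantor_space X \<subseteq> \<Union> (C ` cantor_space X)"
    by (auto simp: C_def cyl_seq_take)
  ultimately obtain \<F> where "finite \<F>" "\<F> \<subseteq> C ` cantor_space X" "cantor_space X \<subseteq> \<Union> \<F>"
    unfolding compact_space_def compactin_def by (metis (no_types, lifting) imageE)
  then obtain F where F: "finite F" "F \<subseteq> cantor_space X" "cantor_space X \<subseteq> \<Union> (C ` F)"
    by (metis finite_subset_image)
  obtain n where n: "depth ` F \<subseteq> {..<n}"
    using finite_nat_bounded F(1) by blast
  have "U = cylset X n (seq_take n ` U)"
  proof (intro equalityI subsetI)
    fix y assume "y \<in> cylset X n (seq_take n ` U)"
    then obtain u where u: "u \<in> U" "seq_take n y = seq_take n u" "y \<in> cantor_space X"
      by (auto simp: cylset_def)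
    then obtain x where x: "x \<in> F" "u \<in> C x" using F U(1) openin_subset by blast
    have "depth x \<le> n" using n x(1) by (auto simp: subset_eq less_imp_le)
    then have "seq_take (depth x) y = seq_take (depth x) u"
      using u(2) by (metis take_seq_take)
    then have "y \<in> C x" "u \<in> C x" using x(2) u(3) F(2) x(1)
      by (auto simp: C_def cyl_seq_take)
    then show "y \<in> U" using depth[of x] F(2) x(1) u(1) by (auto simp: C_def)
  qed (use U(1) openin_subset in \<open>auto simp: cylset_def\<close>)
  moreover have "seq_take n ` U \<subseteq> words X n"
    using U(1) openin_subset seq_take_in_words by blast
  ultimately show thesis using that by blast
qed

section \<open>The group \<open>\<V>\<^sub>X\<close>\<close>

definition prefix_replacing :: "'a set \<Rightarrow> nat \<Rightarrow> ((nat \<Rightarrow> 'a) \<Rightarrow> (nat \<Rightarrow> 'a)) \<Rightarrow> bool" where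
  "prefix_replacing X n g \<longleftrightarrow>
     (\<forall>v\<in>words X n. \<exists>a. set a \<subseteq> X \<and> (\<forall>w\<in>cantor_space X. g (conc v w) = conc a w))"

lemma prefix_replacing_longer:
  assumes g: "prefix_replacing X n g" and v: "v \<in> words X (n + k)"
  obtains a where "set a \<subseteq> X" "k \<le> length a" "\<forall>w\<in>cantor_space X. g (conc v w) = conc a w"
proof -
  obtain a where a: "set a \<subseteq> X" "\<forall>w\<in>cantor_space X. g (conc (take n v) w) = conc a w"
    using g take_in_words[OF v] unfolding prefix_replacing_def by blast
  have "drop n v \<in> words X k" using drop_in_words[OF v] .
  have "g (conc v w) = conc (a @ drop n v) w" if "w \<in> cantor_space X" for w
  proof -
    have "g (conc v w) = g (conc (take n v) (conc (drop n v) w))" by (simp only: conc_take_conc_drop)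
    also have "\<dots> = conc (a @ drop n v) w"
      using a(2) that \<open>drop n v \<in> words X k\<close> by (simp add: conc_append in_words_iff)
    finally show ?thesis .
  qed
  with a(1) \<open>drop n v \<in> words X k\<close> show thesis
    by (intro that[of "a @ drop n v"]) (auto simp: in_words_iff)
qed

lemma prefix_replacing_mono:
  assumes "prefix_replacing X n g" and "n \<le> m" shows "prefix_replacing X m g"
  unfolding prefix_replacing_def
proof
  fix v assume "v \<in> words X m"
  with assms(2) have "v \<in> words X (n + (m - n))" by simp
  from prefix_replacing_longer[OF assms(1) this] show "\<exists>a. set a \<subseteq> X \<and> (\<forall>w\<in>cantor_space X. g (conc v w) = conc a w)"
    by metis
qed

lemma prefix_replacing_comp:
  assumes g: "prefix_replacing X n g" and h: "prefix_replacing X m h"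
  shows "prefix_replacing X (n + m) (h \<circ> g)"
  unfolding prefix_replacing_def
proof
  fix v assume "v \<in> words X (n + m)"
  then obtain a where a: "set a \<subseteq> X" "m \<le> length a" "\<forall>w\<in>cantor_space X. g (conc v w) = conc a w"
    using prefix_replacing_longer[OF g] by blast
  then have "a \<in> words X (m + (length a - m))" by (simp add: in_words_iff)
  then obtain b where b: "set b \<subseteq> X" "\<forall>w\<in>cantor_space X. h (conc a w) = conc b w"
    using prefix_replacing_longer[OF h] by metis
  show "\<exists>c. set c \<subseteq> X \<and> (\<forall>w\<in>cantor_space X. (h \<circ> g) (conc v w) = conc c w)"
    using a(3) b by auto
qed

lemma continuous_map_prefix_replacing:
  assumes g: "prefix_replacing X n g" and maps: "g ` cantor_space X \<subseteq> cantor_space X"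
  shows "continuous_map (cantor_top X) (cantor_top X) g"
  unfolding continuous_map_def
proof (intro conjI allI impI)
  show "g \<in> cantor_space X \<rightarrow> cantor_space X" using maps by auto
  fix U assume U: "openin (cantor_top X) U"
  show "openin (cantor_top X) {x \<in> cantor_space X. g x \<in> U}"
    unfolding openin_cantor_top_iff
  proof (intro conjI ballI)
    fix x assume x: "x \<in> {x \<in> cantor_space X. g x \<in> U}"
    then obtain m where m: "cyl X (seq_take m (g x)) \<subseteq> U"
      using U unfolding openin_cantor_top_iff by blast
    obtain a where a: "\<forall>w\<in>cantor_space X. g (conc (seq_take n x) w) = conc a w"
      using g x seq_take_in_words unfolding prefix_replacing_def by blast
    have "g y \<in> U" if "y \<in> cyl X (seq_take (n + m) x)" for y
    proof -
      have y: "y \<in> cantor_space X" "seq_take (n + m) y = seq_take (n + m) x"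
        using that x by (auto simp: cyl_seq_take)
      then have "seq_take n y = seq_take n x"
        by (metis le_add1 take_seq_take)
      then have gy: "g y = conc a (seq_drop n y)"
        using a seq_drop_in_cantor_space[OF y(1)] conc_seq_take_seq_drop by metis
      have gx: "g x = conc a (seq_drop n x)"
        using a seq_drop_in_cantor_space x conc_seq_take_seq_drop by (metis (no_types, lifting) mem_Collect_eq)
      have "seq_take m (seq_drop n y) = seq_take m (seq_drop n x)"
        using y(2) by (simp add: seq_take_seq_drop)
      then have "seq_take m (g y) = seq_take m (g x)"
        unfolding gx gy by (rule seq_take_conc_cong)
      moreover have "g y \<in> cantor_space X" "g x \<in> cantor_space X" using maps x y(1) by auto
      ultimately show "g y \<in> U" using m by (auto simp: cyl_seq_take)
    qed
    moreover have "cyl X (seq_take (n + m) x) \<subseteq> cantor_space X"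
      using x by (auto simp: cyl_seq_take)
    ultimately show "\<exists>k. cyl X (seq_take k x) \<subseteq> {x \<in> cantor_space X. g x \<in> U}" by blast
  qed auto
qed

text \<open>Elements of \<open>\<V>\<^sub>X\<close> are the identity outside the Cantor space, so their group inverse is the
  inverse on the Cantor space, extended by the identity.\<close>

definition cantor_inv :: "'a set \<Rightarrow> ((nat \<Rightarrow> 'a) \<Rightarrow> (nat \<Rightarrow> 'a)) \<Rightarrow> (nat \<Rightarrow> 'a) \<Rightarrow> (nat \<Rightarrow> 'a)" where
  "cantor_inv X g x = (if x \<in> cantor_space X then inv_into (cantor_space X) g x else x)"

lemma cantor_inv_inverse:
  assumes g: "bij_betw g (cantor_space X) (cantor_space X)"
    and id: "\<forall>x. x \<notin> cantor_space X \<longrightarrow> g x = x"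
  shows "cantor_inv X g \<circ> g = id" and "g \<circ> cantor_inv X g = id"
    and "bij_betw (cantor_inv X g) (cantor_space X) (cantor_space X)"
    and "\<forall>x. x \<notin> cantor_space X \<longrightarrow> cantor_inv X g x = x"
proof -
  have gx: "g x \<in> cantor_space X" if "x \<in> cantor_space X" for x
    using g that bij_betwE by blast
  show "cantor_inv X g \<circ> g = id"
  proof
    fix x show "(cantor_inv X g \<circ> g) x = id x"
      using id gx[of x] bij_betw_inv_into_left[OF g, of x]
      by (cases "x \<in> cantor_space X") (auto simp: cantor_inv_def)
  qed
  show "g \<circ> cantor_inv X g = id"
  proof
    fix x show "(g \<circ> cantor_inv X g) x = id x"
      using id bij_betw_inv_into_right[OF g, of x]
      by (cases "x \<in> cantor_space X") (auto simp: cantor_inv_def)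
  qed
  show "bij_betw (cantor_inv X g) (cantor_space X) (cantor_space X)"
    using bij_betw_inv_into[OF g] by (rule bij_betw_cong[THEN iffD1, rotated]) (simp add: cantor_inv_def)
qed (simp add: cantor_inv_def)

lemma prefix_replacing_cantor_inv:
  assumes "X \<noteq> {}" and "finite X" and g: "prefix_replacing X n g"
    and bij: "bij_betw g (cantor_space X) (cantor_space X)"
  obtains m where "prefix_replacing X m (cantor_inv X g)"
proof -
  obtain a where a: "\<And>v. v \<in> words X n \<Longrightarrow> set (a v) \<subseteq> X \<and> (\<forall>w\<in>cantor_space X. g (conc v w) = conc (a v) w)"
    using g unfolding prefix_replacing_def by metis
  obtain m where m: "length ` a ` words X n \<subseteq> {..<m}"
    using finite_nat_bounded finite_words[OF \<open>finite X\<close>] by (metis finite_imageI)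
  obtain w0 where w0: "w0 \<in> cantor_space X" using cantor_space_nonempty[OF \<open>X \<noteq> {}\<close>] .
  \<comment> \<open>every word of length \<open>m\<close> starts with some new prefix \<open>a v\<close>, which the inverse turns back into \<open>v\<close>\<close>
  have "prefix_replacing X m (cantor_inv X g)" unfolding prefix_replacing_def
  proof
    fix u assume u: "u \<in> words X m"
    then have "conc u w0 \<in> cantor_space X" using w0 by (simp add: in_words_iff)
    then obtain y where y: "y \<in> cantor_space X" "g y = conc u w0"
      using bij unfolding bij_betw_def by (metis imageE)
    define v where "v = seq_take n y"
    have v: "v \<in> words X n" using y(1) seq_take_in_words v_def by metis
    then have av: "set (a v) \<subseteq> X" "\<forall>w\<in>cantor_space X. g (conc v w) = conc (a v) w" using a by auto
    have "length (a v) \<le> m" using m v by fastforce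
    moreover have "g y = conc (a v) (seq_drop n y)"
      using av(2) seq_drop_in_cantor_space[OF y(1)] conc_seq_take_seq_drop v_def by metis
    ultimately have "take (length (a v)) u = a v"
      using y(2) u by (metis seq_take_conc seq_take_conc_le in_words_iff)
    then have u_eq: "u = a v @ drop (length (a v)) u" by (metis append_take_drop_id)
    define r where "r = drop (length (a v)) u"
    have r: "set r \<subseteq> X" using u by (auto simp: in_words_iff r_def dest: in_set_dropD)
    have "cantor_inv X g (conc u w) = conc (v @ r) w" if w: "w \<in> cantor_space X" for w
    proof -
      have "g (conc (v @ r) w) = g (conc v (conc r w))" by (simp add: conc_append)
      also have "\<dots> = conc (a v @ r) w" using av(2) r w by (simp add: conc_append)
      also have "\<dots> = conc u w" using u_eq r_def by simp
      finally have "g (conc (v @ r) w) = conc u w" .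
      moreover have "conc (v @ r) w \<in> cantor_space X" using v r w by (simp add: in_words_iff)
      ultimately have "inv_into (cantor_space X) g (conc u w) = conc (v @ r) w"
        using bij_betw_inv_into_left[OF bij] by metis
      moreover have "conc u w \<in> cantor_space X" using u w by (simp add: in_words_iff)
      ultimately show ?thesis by (simp add: cantor_inv_def)
    qed
    then show "\<exists>c. set c \<subseteq> X \<and> (\<forall>w\<in>cantor_space X. cantor_inv X g (conc u w) = conc c w)"
      using v r by (intro exI[of _ "v @ r"]) (auto simp: in_words_iff)
  qed
  then show thesis using that by blast
qed

lemma complete_antichain_words:
  assumes "finite X" shows "complete_antichain X (words X n)"
  unfolding complete_antichain_def
proof (intro conjI)
  show "finite (words X n)" using finite_words[OF assms] .
  show "words X n \<subseteq> lists X" by (auto simp: in_words_iff)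
  show "\<forall>u\<in>words X n. \<forall>v\<in>words X n. u \<noteq> v \<longrightarrow> \<not> (\<exists>w. v = u @ w)"
    by (auto simp: in_words_iff)
  show "(\<Union>v\<in>words X n. cyl X v) = cantor_space X"
    using cylset_eq_UN[of "words X n" X n] cylset_words[of X n] by simp
  show "disjoint_family_on (cyl X) (words X n)"
    unfolding disjoint_family_on_def by (metis disjoint_cyl in_words_iff)
qed

lemma complete_antichain_replacements:
  assumes X: "X \<noteq> {}" and "finite X" and bij: "bij_betw g (cantor_space X) (cantor_space X)"
    and a: "\<And>v. v \<in> words X n \<Longrightarrow> set (a v) \<subseteq> X \<and> (\<forall>w\<in>cantor_space X. g (conc v w) = conc (a v) w)"
  shows "inj_on a (words X n)" and "complete_antichain X (a ` words X n)"
proof -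
  have img: "g ` cyl X v = cyl X (a v)" if "v \<in> words X n" for v
    using a[OF that] image_cyl by blast
  have disj: "cyl X (a u) \<inter> cyl X (a v) = {}" if "u \<in> words X n" "v \<in> words X n" "u \<noteq> v" for u v
  proof -
    have "cyl X (a u) \<inter> cyl X (a v) = g ` (cyl X u \<inter> cyl X v)"
      using img[OF that(1)] img[OF that(2)] bij_betw_imp_inj_on[OF bij] that(1,2)
      by (simp add: inj_on_image_Int cyl_subset_cantor_space in_words_iff)
    also have "\<dots> = {}" using that by (simp add: disjoint_cyl in_words_iff)
    finally show ?thesis .
  qed
  have nonempty: "cyl X (a v) \<noteq> {}" if "v \<in> words X n" for v
    using a[OF that] cyl_nonempty[OF X] by blast
  show "inj_on a (words X n)"
    using disj nonempty by (metis Int_absorb inj_onI)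
  show "complete_antichain X (a ` words X n)"
    unfolding complete_antichain_def
  proof (intro conjI ballI impI)
    show "finite (a ` words X n)" using finite_words[OF \<open>finite X\<close>] by blast
    show "a ` words X n \<subseteq> lists X" using a by auto
    show "(\<Union>v\<in>a ` words X n. cyl X v) = cantor_space X"
    proof -
      have "(\<Union>v\<in>a ` words X n. cyl X v) = g ` (\<Union>v\<in>words X n. cyl X v)"
        using img by (simp add: image_UN)
      also have "\<dots> = cantor_space X"
        using complete_antichain_words[OF \<open>finite X\<close>, of n] bij
        by (simp add: complete_antichain_def bij_betw_def)
      finally show ?thesis .
    qed
    show "disjoint_family_on (cyl X) (a ` words X n)"
      unfolding disjoint_family_on_def using disj by blast
  next
    fix p q assume "p \<in> a ` words X n" "q \<in> a ` words X n" "p \<noteq> q"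
    then obtain u v where uv: "u \<in> words X n" "v \<in> words X n" "u \<noteq> v" "p = a u" "q = a v"
      by blast
    show "\<not> (\<exists>t. q = p @ t)"
    proof
      assume "\<exists>t. q = p @ t"
      then obtain t where "q = p @ t" by blast
      then have "cyl X q \<subseteq> cyl X p" using a[OF uv(2)] uv(5) by (simp add: cyl_append_subset)
      then show False using disj[OF uv(1-3)] nonempty[OF uv(2)] uv(4,5) by blast
    qed
  qed
qed

lemma HT_imp_prefix_replacing:
  assumes X: "X \<noteq> {}" and g: "g \<in> HT X"
  obtains n where "prefix_replacing X n g"
proof -
  obtain A1 A2 \<alpha> where A: "complete_antichain X A1" "complete_antichain X A2"
      "bij_betw \<alpha> A1 A2" "\<forall>v\<in>A1. \<forall>w\<in>cantor_space X. g (conc v w) = conc (\<alpha> v) w"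
    using g unfolding HT_def by blast
  obtain n where n: "length ` A1 \<subseteq> {..<n}"
    using A(1) finite_nat_bounded unfolding complete_antichain_def by (metis finite_imageI)
  obtain w0 where w0: "w0 \<in> cantor_space X" using cantor_space_nonempty[OF X] .
  have "prefix_replacing X n g" unfolding prefix_replacing_def
  proof
    fix v assume v: "v \<in> words X n"
    then have "conc v w0 \<in> (\<Union>a\<in>A1. cyl X a)"
      using A(1) w0 by (simp add: complete_antichain_def in_words_iff)
    then obtain a w' where aw: "a \<in> A1" "conc v w0 = conc a w'" by (auto simp: cyl_def)
    have "length a \<le> n" using n aw(1) by fastforce
    then have "take (length a) v = a"
      using aw(2) v by (metis seq_take_conc seq_take_conc_le in_words_iff)
    then have v_eq: "conc v w = conc a (conc (drop (length a) v) w)" for w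
      by (metis conc_take_conc_drop)
    have dX: "set (drop (length a) v) \<subseteq> X" using v by (auto simp: in_words_iff dest: in_set_dropD)
    have aX: "set (\<alpha> a) \<subseteq> X" using A(2,3) aw(1) by (auto simp: complete_antichain_def bij_betw_def)
    show "\<exists>c. set c \<subseteq> X \<and> (\<forall>w\<in>cantor_space X. g (conc v w) = conc c w)"
      using A(4) aw(1) aX dX
      by (intro exI[of _ "\<alpha> a @ drop (length a) v"]) (simp add: v_eq conc_append)
  qed
  then show thesis using that by blast
qed

lemma HT_iff:
  assumes X: "X \<noteq> {}" and "finite X"
  shows "g \<in> HT X \<longleftrightarrow> bij_betw g (cantor_space X) (cantor_space X) \<and>
      (\<forall>x. x \<notin> cantor_space X \<longrightarrow> g x = x) \<and> (\<exists>n. prefix_replacing X n g)"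
    (is "_ \<longleftrightarrow> ?bij \<and> ?id \<and> ?local")
proof
  assume g: "g \<in> HT X"
  then obtain h where h: "homeomorphic_maps (cantor_top X) (cantor_top X) g h"
    by (auto simp: HT_def homeomorphic_map_maps)
  have ?bij
    by (rule bij_betw_byWitness[where f' = h])
      (use h in \<open>auto simp: homeomorphic_maps_def continuous_map_def\<close>)
  moreover have ?local using HT_imp_prefix_replacing[OF X g] by blast
  ultimately show "?bij \<and> ?id \<and> ?local" using g by (simp add: HT_def)
next
  assume "?bij \<and> ?id \<and> ?local"
  then obtain n where bij: ?bij and id: ?id and g: "prefix_replacing X n g" by blast
  obtain m where m: "prefix_replacing X m (cantor_inv X g)"
    using prefix_replacing_cantor_inv[OF X \<open>finite X\<close> g bij] .
  note inv = cantor_inv_inverse[OF bij id]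
  have "homeomorphic_maps (cantor_top X) (cantor_top X) g (cantor_inv X g)"
    unfolding homeomorphic_maps_def
    using continuous_map_prefix_replacing[OF g] continuous_map_prefix_replacing[OF m]
      bij_betw_imp_surj_on[OF bij] bij_betw_imp_surj_on[OF inv(3)] inv(1,2)
    by (auto simp: pointfree_idE)
  moreover obtain a where a: "\<And>v. v \<in> words X n \<Longrightarrow>
      set (a v) \<subseteq> X \<and> (\<forall>w\<in>cantor_space X. g (conc v w) = conc (a v) w)"
    using g unfolding prefix_replacing_def by metis
  note antichain = complete_antichain_replacements[OF X \<open>finite X\<close> bij a]
  ultimately show "g \<in> HT X"
    unfolding HT_def homeomorphic_map_maps using id a complete_antichain_words[OF \<open>finite X\<close>]
    by (intro CollectI conjI exI[of _ "words X n"] exI[of _ "a ` words X n"] exI[of _ a])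
      (auto simp: bij_betw_def antichain)
qed

lemma HT_comp:
  assumes "X \<noteq> {}" and "finite X" and g: "g \<in> HT X" and h: "h \<in> HT X"
  shows "h \<circ> g \<in> HT X"
proof -
  obtain n where g: "bij_betw g (cantor_space X) (cantor_space X)"
    "\<forall>x. x \<notin> cantor_space X \<longrightarrow> g x = x" "prefix_replacing X n g"
    using g unfolding HT_iff[OF assms(1,2)] by blast
  obtain m where h: "bij_betw h (cantor_space X) (cantor_space X)"
    "\<forall>x. x \<notin> cantor_space X \<longrightarrow> h x = x" "prefix_replacing X m h"
    using h unfolding HT_iff[OF assms(1,2)] by blast
  show ?thesis unfolding HT_iff[OF assms(1,2)]
    using bij_betw_trans[OF g(1) h(1)] prefix_replacing_comp[OF g(3) h(3)] g(2) h(2) by auto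
qed

lemma HT_cantor_inv:
  assumes "X \<noteq> {}" and "finite X" and "g \<in> HT X"
  shows "cantor_inv X g \<in> HT X" and "cantor_inv X g \<circ> g = id"
proof -
  obtain n where bij: "bij_betw g (cantor_space X) (cantor_space X)"
    and id: "\<forall>x. x \<notin> cantor_space X \<longrightarrow> g x = x" and g: "prefix_replacing X n g"
    using assms(3) unfolding HT_iff[OF assms(1,2)] by blast
  obtain m where "prefix_replacing X m (cantor_inv X g)"
    using prefix_replacing_cantor_inv[OF assms(1,2) g bij] .
  then show "cantor_inv X g \<in> HT X"
    using cantor_inv_inverse(3,4)[OF bij id] unfolding HT_iff[OF assms(1,2)] by blast
  show "cantor_inv X g \<circ> g = id" using cantor_inv_inverse(1)[OF bij id] .
qed

lemma id_in_HT:
  assumes "X \<noteq> {}" and "finite X" shows "id \<in> HT X"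
proof -
  have "prefix_replacing X 0 id" unfolding prefix_replacing_def
    by (auto simp: in_words_iff intro!: exI[of _ "[]"])
  then show ?thesis unfolding HT_iff[OF assms] by auto
qed

lemma group_HT_group:
  assumes "X \<noteq> {}" and "finite X" shows "group (HT_group X)"
proof (rule groupI)
  fix g assume "g \<in> carrier (HT_group X)"
  then show "\<exists>h\<in>carrier (HT_group X). h \<otimes>\<^bsub>HT_group X\<^esub> g = \<one>\<^bsub>HT_group X\<^esub>"
    using HT_cantor_inv[OF assms] by (auto simp: HT_group_def)
qed (simp_all add: HT_group_def HT_comp[OF assms] id_in_HT[OF assms] comp_assoc)

lemma inv_HT_group:
  assumes "X \<noteq> {}" and "finite X" and "g \<in> HT X"
  shows "inv\<^bsub>HT_group X\<^esub> g = cantor_inv X g"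
  using group.inv_equality[OF group_HT_group[OF assms(1,2)], of "cantor_inv X g" g]
    HT_cantor_inv[OF assms] assms(3)
  by (simp add: HT_group_def)

lemma subgroup_HT_comm:
  assumes "X \<noteq> {}" and "finite X" shows "subgroup (HT_comm X) (HT_group X)"
  unfolding HT_comm_def using group.derived_is_subgroup[OF group_HT_group[OF assms], of "HT X"]
  by (simp add: HT_group_def)

lemma HT_comm_subset_HT:
  assumes "X \<noteq> {}" and "finite X" shows "HT_comm X \<subseteq> HT X"
  using subgroup.subset[OF subgroup_HT_comm[OF assms]] by (simp add: HT_group_def)

lemma HT_comm_closed:
  assumes "X \<noteq> {}" and "finite X"
  shows "id \<in> HT_comm X"
    and "g \<in> HT_comm X \<Longrightarrow> h \<in> HT_comm X \<Longrightarrow> g \<circ> h \<in> HT_comm X"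
    and "g \<in> HT_comm X \<Longrightarrow> \<exists>h\<in>HT_comm X. h \<circ> g = id"
proof -
  interpret H: subgroup "HT_comm X" "HT_group X" using subgroup_HT_comm[OF assms] .
  show "id \<in> HT_comm X" using H.one_closed by (simp add: HT_group_def)
  show "g \<in> HT_comm X \<Longrightarrow> h \<in> HT_comm X \<Longrightarrow> g \<circ> h \<in> HT_comm X"
    using H.m_closed by (simp add: HT_group_def)
  assume g: "g \<in> HT_comm X"
  then have "inv\<^bsub>HT_group X\<^esub> g \<otimes>\<^bsub>HT_group X\<^esub> g = \<one>\<^bsub>HT_group X\<^esub>"
    using group.l_inv[OF group_HT_group[OF assms]] H.subset by blast
  then show "\<exists>h\<in>HT_comm X. h \<circ> g = id"
    using H.m_inv_closed[OF g] by (auto simp: HT_group_def)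
qed

lemma commutator_in_HT_comm:
  assumes "X \<noteq> {}" and "finite X" and "g \<in> HT X" and "h \<in> HT X"
  shows "g \<circ> h \<circ> cantor_inv X g \<circ> cantor_inv X h \<in> HT_comm X"
proof -
  let ?G = "HT_group X"
  have "g \<otimes>\<^bsub>?G\<^esub> h \<otimes>\<^bsub>?G\<^esub> inv\<^bsub>?G\<^esub> g \<otimes>\<^bsub>?G\<^esub> inv\<^bsub>?G\<^esub> h \<in> derived_set ?G (HT X)"
    using assms(3,4) by blast
  then have "g \<otimes>\<^bsub>?G\<^esub> h \<otimes>\<^bsub>?G\<^esub> inv\<^bsub>?G\<^esub> g \<otimes>\<^bsub>?G\<^esub> inv\<^bsub>?G\<^esub> h \<in> HT_comm X"
    unfolding HT_comm_def derived_def by (rule generate.incl)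
  then show ?thesis using inv_HT_group[OF assms(1,2)] assms(3,4) by (simp add: HT_group_def)
qed

lemma same_orbit_refl: "id \<in> G \<Longrightarrow> same_orbit G U U"
  unfolding same_orbit_def by (intro bexI[of _ id]) simp_all

lemma same_orbit_trans:
  assumes "\<And>g h. g \<in> G \<Longrightarrow> h \<in> G \<Longrightarrow> g \<circ> h \<in> G"
    and "same_orbit G U V" and "same_orbit G V W"
  shows "same_orbit G U W"
proof -
  obtain g h where "g \<in> G" "g ` U = V" "h \<in> G" "h ` V = W"
    using assms(2,3) unfolding same_orbit_def by blast
  moreover from this have "(h \<circ> g) ` U = W" by (simp only: image_comp[symmetric])
  ultimately show ?thesis unfolding same_orbit_def using assms(1) by blast
qed

lemma same_orbit_sym:
  assumes "\<And>g. g \<in> G \<Longrightarrow> \<exists>h\<in>G. h \<circ> g = id" and "same_orbit G U V"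
  shows "same_orbit G V U"
proof -
  obtain g where g: "g \<in> G" "g ` U = V" using assms(2) unfolding same_orbit_def by blast
  then obtain h where h: "h \<in> G" "h \<circ> g = id" using assms(1) by blast
  have "h ` V = (h \<circ> g) ` U" using g(2) by (simp only: image_comp[symmetric])
  then have "h ` V = U" using h(2) by simp
  then show ?thesis unfolding same_orbit_def using h(1) by blast
qed

section \<open>The invariant \<open>m(U)\<close>\<close>

lemma UN_nth_eq_UN_set: "(\<Union>i<length vs. F (vs ! i)) = (\<Union>v\<in>set vs. F v)"
  by (auto simp: in_set_conv_nth) (use nth_mem in blast)

lemma decomp_cylset:
  assumes S: "S \<subseteq> words X n" and vs: "set vs = S" "distinct vs"
  shows "decomp X (cylset X n S) vs"
  unfolding decomp_def
proof (intro conjI allI impI)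
  show "set vs \<subseteq> lists X" using vs(1) S by (auto simp: subset_words_iff)
  fix i j assume "i < length vs" "j < length vs" "i \<noteq> j"
  moreover from this have "vs ! i \<in> S" "vs ! j \<in> S" using vs(1) by auto
  ultimately show "cyl X (vs ! i) \<inter> cyl X (vs ! j) = {}"
    using S vs(2) by (intro disjoint_cyl) (auto simp: subset_words_iff nth_eq_iff_index_eq)
qed (simp add: UN_nth_eq_UN_set vs(1) cylset_eq_UN[OF S])

definition words_extending :: "'a set \<Rightarrow> nat \<Rightarrow> 'a list list \<Rightarrow> 'a list set" where
  "words_extending X N vs = {w \<in> words X N. \<exists>v\<in>set vs. take (length v) w = v}"

lemma cylset_words_extending:
  assumes d: "decomp X U vs" and N: "\<forall>v\<in>set vs. length v \<le> N"
  shows "U = cylset X N (words_extending X N vs)"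
proof -
  have U: "U = (\<Union>v\<in>set vs. cyl X v)" and vs: "set vs \<subseteq> lists X"
    using d by (auto simp: decomp_def UN_nth_eq_UN_set)
  have cyl: "cyl X v = {x \<in> cantor_space X. seq_take (length v) x = v}" if "v \<in> set vs" for v
    using vs that by (intro cyl_eq) auto
  have "x \<in> U \<longleftrightarrow> x \<in> cylset X N (words_extending X N vs)" for x
  proof -
    have "x \<in> U \<longleftrightarrow> (\<exists>v\<in>set vs. x \<in> cantor_space X \<and> seq_take (length v) x = v)"
      using U cyl by auto
    also have "\<dots> \<longleftrightarrow> (\<exists>v\<in>set vs. x \<in> cantor_space X \<and> take (length v) (seq_take N x) = v)"
      using N by (simp add: take_seq_take)
    also have "\<dots> \<longleftrightarrow> x \<in> cylset X N (words_extending X N vs)"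
      using seq_take_in_words[of x X N] by (auto simp: cylset_def words_extending_def)
    finally show ?thesis .
  qed
  then show ?thesis by blast
qed

lemma card_words_extending:
  assumes X: "X \<noteq> {}" and "finite X" and d: "decomp X U vs" and N: "\<forall>v\<in>set vs. length v \<le> N"
  shows "card (words_extending X N vs) = (\<Sum>i<length vs. card X ^ (N - length (vs ! i)))"
proof -
  have vs: "set (vs ! i) \<subseteq> X" "length (vs ! i) \<le> N" if "i < length vs" for i
  proof -
    have "vs ! i \<in> set vs" using that by simp
    then show "set (vs ! i) \<subseteq> X" "length (vs ! i) \<le> N"
      using d N by (auto simp: decomp_def)
  qed
  define B where "B i = extend_words X (length (vs ! i)) (N - length (vs ! i)) {vs ! i}" for i
  have B: "B i = {w \<in> words X N. take (length (vs ! i)) w = vs ! i}" if "i < length vs" for i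
    using vs[OF that] by (auto simp: B_def extend_words_def)
  have "words_extending X N vs = (\<Union>i<length vs. B i)"
    using B by (auto simp: words_extending_def in_set_conv_nth) (metis nth_mem)
  moreover have "card (B i) = card X ^ (N - length (vs ! i))" if "i < length vs" for i
    using card_extend_words[OF \<open>finite X\<close>, of "{vs ! i}"] vs[OF that] by (simp add: B_def in_words_iff)
  moreover have "finite (B i)" for i
    using finite_subset[OF extend_words_subset finite_words[OF \<open>finite X\<close>]] by (simp add: B_def)
  moreover have "B i \<inter> B j = {}" if "i < length vs" "j < length vs" "i \<noteq> j" for i j
  proof (rule ccontr)
    assume "B i \<inter> B j \<noteq> {}"
    then obtain w where "w \<in> B i" "w \<in> B j" by blast
    obtain w0 where w0: "w0 \<in> cantor_space X" using cantor_space_nonempty[OF X] .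
    have "conc w w0 \<in> cyl X (vs ! k)" if "k < length vs" "w \<in> B k" for k
    proof -
      from that B have w: "w \<in> words X N" "take (length (vs ! k)) w = vs ! k" by auto
      then have "conc w w0 = conc (vs ! k) (conc (drop (length (vs ! k)) w) w0)"
        by (metis conc_take_conc_drop)
      moreover have "conc (drop (length (vs ! k)) w) w0 \<in> cantor_space X"
        using w(1) w0 by (auto simp: in_words_iff dest: in_set_dropD)
      ultimately show ?thesis by (simp add: conc_in_cyl)
    qed
    then have "conc w w0 \<in> cyl X (vs ! i) \<inter> cyl X (vs ! j)"
      using that \<open>w \<in> B i\<close> \<open>w \<in> B j\<close> by blast
    then show False using d that unfolding decomp_def by blast
  qed
  ultimately show ?thesis by (simp add: card_UN_disjoint)
qed

lemma sum_power_cong: "1 \<le> (d::nat) \<Longrightarrow> [(\<Sum>i<n. d ^ f i) = n] (mod (d - 1))"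
proof -
  assume "1 \<le> d"
  then have "[d = 1] (mod (d - 1))" by (simp add: cong_def mod_if le_imp_diff_is_add)
  then have "[(\<Sum>i<n. d ^ f i) = (\<Sum>i<n. 1)] (mod (d - 1))"
    by (intro cong_sum) (metis cong_pow power_one)
  then show ?thesis by simp
qed

lemma decomp_length_cong:
  assumes "finite X" and d: "2 \<le> card X" and vs1: "decomp X U vs1" and vs2: "decomp X U vs2"
  shows "[length vs1 = length vs2] (mod (card X - 1))"
proof -
  have X: "X \<noteq> {}" using d by auto
  obtain N where N: "length ` (set vs1 \<union> set vs2) \<subseteq> {..<N}"
    using finite_nat_bounded by (metis List.finite_set finite_Un finite_imageI)
  then have N1: "\<forall>v\<in>set vs1. length v \<le> N" and N2: "\<forall>v\<in>set vs2. length v \<le> N" by auto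
  have sub: "words_extending X N vs \<subseteq> words X N" for vs
    by (auto simp: words_extending_def)
  have "words_extending X N vs1 = words_extending X N vs2"
    using cylset_words_extending[OF vs1 N1] cylset_words_extending[OF vs2 N2] cylset_inject[OF X sub sub]
    by simp
  moreover have "[card (words_extending X N vs) = length vs] (mod (card X - 1))"
    if "decomp X U vs" "\<forall>v\<in>set vs. length v \<le> N" for vs
    using card_words_extending[OF X \<open>finite X\<close> that] sum_power_cong[of "card X"] d by simp
  ultimately show ?thesis
    using vs1 vs2 N1 N2 cong_sym cong_trans by metis
qed

lemma mres_eq:
  assumes "finite X" and "2 \<le> card X" and "decomp X U vs"
  shows "mres X U = length vs mod (card X - 1)"
  unfolding mres_def
proof (rule the_equality)
  fix r assume "\<exists>vs'. decomp X U vs' \<and> r = length vs' mod (card X - 1)"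
  then show "r = length vs mod (card X - 1)"
    using decomp_length_cong[OF assms] by (auto simp: cong_def)
qed (use assms(3) in blast)

lemma mres_cylset:
  assumes "finite X" and "2 \<le> card X" and S: "S \<subseteq> words X n"
  shows "mres X (cylset X n S) = card S mod (card X - 1)"
proof -
  obtain vs where "set vs = S" "distinct vs"
    using finite_distinct_list[OF finite_subset_words[OF \<open>finite X\<close> S]] by blast
  then show ?thesis
    using decomp_cylset[OF S] mres_eq[OF assms(1,2)] distinct_card by metis
qed

lemma decomp_image_cylset:
  assumes X: "X \<noteq> {}" and "finite X" and g: "g \<in> HT X" and gn: "prefix_replacing X n g"
    and S: "S \<subseteq> words X n"
  obtains vs where "decomp X (g ` cylset X n S) vs" and "length vs = card S"
proof -
  have bij: "bij_betw g (cantor_space X) (cantor_space X)" using g HT_iff[OF X \<open>finite X\<close>] by blast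
  obtain a where a: "\<And>v. v \<in> words X n \<Longrightarrow>
      set (a v) \<subseteq> X \<and> (\<forall>w\<in>cantor_space X. g (conc v w) = conc (a v) w)"
    using gn unfolding prefix_replacing_def by metis
  note antichain = complete_antichain_replacements[OF X \<open>finite X\<close> bij a]
  obtain ws where ws: "set ws = S" "distinct ws"
    using finite_distinct_list[OF finite_subset_words[OF \<open>finite X\<close> S]] by blast
  have ws_words: "ws ! i \<in> words X n" if "i < length ws" for i
    using ws(1) S that nth_mem by blast
  have "decomp X (g ` cylset X n S) (map a ws)"
    unfolding decomp_def
  proof (intro conjI allI impI)
    show "set (map a ws) \<subseteq> lists X" using a ws(1) S by auto
    fix i j assume ij: "i < length (map a ws)" "j < length (map a ws)" "i \<noteq> j"
    then have "ws ! i \<noteq> ws ! j" using ws(2) by (simp add: nth_eq_iff_index_eq)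
    then have "a (ws ! i) \<noteq> a (ws ! j)"
      using inj_onD[OF antichain(1), where x = "ws ! i" and y = "ws ! j"] ws_words ij by auto
    then show "cyl X (map a ws ! i) \<inter> cyl X (map a ws ! j) = {}"
      using antichain(2) ws_words ij by (auto simp: complete_antichain_def disjoint_family_on_def)
  next
    have "g ` cyl X v = cyl X (a v)" if "v \<in> S" for v
      using a S that image_cyl by blast
    then show "(\<Union>i<length (map a ws). cyl X (map a ws ! i)) = g ` cylset X n S"
      using UN_nth_eq_UN_set[of "\<lambda>v. cyl X (a v)" ws]
      by (simp add: cylset_eq_UN[OF S] image_UN ws(1))
  qed
  then show thesis using that ws distinct_card by (metis length_map)
qed

lemma mres_image_HT:
  assumes "finite X" and "2 \<le> card X" and U: "clopen_in X U" and g: "g \<in> HT X"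
  shows "mres X (g ` U) = mres X U"
proof -
  have X: "X \<noteq> {}" using assms(2) by auto
  obtain k where gk: "prefix_replacing X k g" using g HT_iff[OF X \<open>finite X\<close>] by blast
  obtain n S where S: "S \<subseteq> words X n" "U = cylset X n S"
    using clopen_in_eq_cylset[OF \<open>finite X\<close> U] .
  define T where "T = extend_words X n k S"
  have T: "T \<subseteq> words X (n + k)" "U = cylset X (n + k) T"
    using S(2) by (simp_all add: T_def extend_words_subset cylset_extend_words)
  have "prefix_replacing X (n + k) g" using prefix_replacing_mono[OF gk] by simp
  then obtain vs where "decomp X (g ` U) vs" "length vs = card T"
    using decomp_image_cylset[OF X \<open>finite X\<close> g _ T(1)] T(2) by metis
  then show ?thesis using mres_eq[OF assms(1,2)] mres_cylset[OF assms(1,2) T(1)] T(2) by simp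
qed

section \<open>Elements of the commutator subgroup\<close>

definition level_perm :: "'a set \<Rightarrow> nat \<Rightarrow> ('a list \<Rightarrow> 'a list) \<Rightarrow> (nat \<Rightarrow> 'a) \<Rightarrow> (nat \<Rightarrow> 'a)" where
  "level_perm X n \<pi> x = (if x \<in> cantor_space X then conc (\<pi> (seq_take n x)) (seq_drop n x) else x)"

lemma level_perm_conc:
  assumes "\<pi> permutes words X n" and "v \<in> words X n" and "w \<in> cantor_space X"
  shows "level_perm X n \<pi> (conc v w) = conc (\<pi> v) w"
  using assms by (simp add: level_perm_def in_words_iff)

lemma level_perm_comp:
  assumes \<pi>: "\<pi> permutes words X n" and \<rho>: "\<rho> permutes words X n"
  shows "level_perm X n \<pi> \<circ> level_perm X n \<rho> = level_perm X n (\<pi> \<circ> \<rho>)"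
proof
  fix x show "(level_perm X n \<pi> \<circ> level_perm X n \<rho>) x = level_perm X n (\<pi> \<circ> \<rho>) x"
  proof (cases "x \<in> cantor_space X")
    case True
    let ?p = "\<rho> (seq_take n x)"
    have p: "?p \<in> words X n"
      using permutes_in_image[OF \<rho>] seq_take_in_words[OF True] by blast
    have "level_perm X n \<rho> x = conc ?p (seq_drop n x)" using True by (simp add: level_perm_def)
    then have "level_perm X n \<pi> (level_perm X n \<rho> x) = conc (\<pi> ?p) (seq_drop n x)"
      using level_perm_conc[OF \<pi> p seq_drop_in_cantor_space[OF True]] by simp
    then show ?thesis using True by (simp add: level_perm_def)
  qed (simp add: level_perm_def)
qed

lemma level_perm_id [simp]: "level_perm X n id = id"
  by (auto simp: level_perm_def)

(* In HOL-Algebra, plain inv denotes the inverse in an implicit group structure. *)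
lemma level_perm_inv:
  assumes "\<pi> permutes words X n"
  shows "level_perm X n (Hilbert_Choice.inv \<pi>) \<circ> level_perm X n \<pi> = id" and "level_perm X n \<pi> \<circ> level_perm X n (Hilbert_Choice.inv \<pi>) = id"
  using level_perm_comp[OF permutes_inv[OF assms] assms] level_perm_comp[OF assms permutes_inv[OF assms]]
  by (simp_all add: permutes_inv_o[OF assms])

lemma level_perm_in_HT:
  assumes "X \<noteq> {}" and "finite X" and \<pi>: "\<pi> permutes words X n"
  shows "level_perm X n \<pi> \<in> HT X"
  unfolding HT_iff[OF assms(1,2)]
proof (intro conjI exI)
  have maps: "level_perm X n \<rho> x \<in> cantor_space X" if "\<rho> permutes words X n" "x \<in> cantor_space X" for \<rho> x
  proof -
    have "\<rho> (seq_take n x) \<in> words X n"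
      using permutes_in_image[OF that(1)] seq_take_in_words[OF that(2)] by blast
    then show ?thesis
      using seq_drop_in_cantor_space[OF that(2)] that(2) by (simp add: level_perm_def in_words_iff)
  qed
  show "bij_betw (level_perm X n \<pi>) (cantor_space X) (cantor_space X)"
    by (rule bij_betw_byWitness[where f' = "level_perm X n (Hilbert_Choice.inv \<pi>)"])
      (use level_perm_inv[OF \<pi>] maps \<pi> permutes_inv[OF \<pi>] in \<open>auto simp: pointfree_idE\<close>)
  show "prefix_replacing X n (level_perm X n \<pi>)"
    unfolding prefix_replacing_def
    using level_perm_conc[OF \<pi>] permutes_in_image[OF \<pi>] by (metis in_words_iff)
qed (simp add: level_perm_def)

lemma cantor_inv_level_perm:
  assumes "X \<noteq> {}" and "finite X" and \<pi>: "\<pi> permutes words X n"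
  shows "cantor_inv X (level_perm X n \<pi>) = level_perm X n (Hilbert_Choice.inv \<pi>)"
proof -
  let ?g = "level_perm X n \<pi>" and ?h = "level_perm X n (Hilbert_Choice.inv \<pi>)"
  have "cantor_inv X ?g = cantor_inv X ?g \<circ> (?g \<circ> ?h)"
    using level_perm_inv(2)[OF \<pi>] by simp
  also have "\<dots> = ?h"
    using HT_cantor_inv(2)[OF assms(1,2) level_perm_in_HT[OF assms]] by (simp add: o_assoc)
  finally show ?thesis .
qed

lemma level_perm_commutator_in_HT_comm:
  assumes "X \<noteq> {}" and "finite X" and \<pi>: "\<pi> permutes words X n" and \<rho>: "\<rho> permutes words X n"
  shows "level_perm X n (\<pi> \<circ> \<rho> \<circ> Hilbert_Choice.inv \<pi> \<circ> Hilbert_Choice.inv \<rho>) \<in> HT_comm X"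
proof -
  have "level_perm X n (\<pi> \<circ> \<rho> \<circ> Hilbert_Choice.inv \<pi> \<circ> Hilbert_Choice.inv \<rho>) =
      level_perm X n \<pi> \<circ> level_perm X n \<rho> \<circ> level_perm X n (Hilbert_Choice.inv \<pi>) \<circ> level_perm X n (Hilbert_Choice.inv \<rho>)"
    using \<pi> \<rho> permutes_inv[OF \<pi>] permutes_inv[OF \<rho>]
    by (simp add: level_perm_comp permutes_compose)
  then show ?thesis
    using commutator_in_HT_comm[OF assms(1,2) level_perm_in_HT[OF assms(1,2) \<pi>] level_perm_in_HT[OF assms(1,2) \<rho>]]
    by (simp add: cantor_inv_level_perm[OF assms(1,2)] \<pi> \<rho>)
qed

lemma image_level_perm_cylset:
  assumes \<pi>: "\<pi> permutes words X n" and S: "S \<subseteq> words X n"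
  shows "level_perm X n \<pi> ` cylset X n S = cylset X n (\<pi> ` S)"
proof (intro equalityI subsetI)
  fix y assume "y \<in> level_perm X n \<pi> ` cylset X n S"
  then obtain x where x: "x \<in> cantor_space X" "seq_take n x \<in> S" "y = level_perm X n \<pi> x"
    by (auto simp: cylset_def)
  then have "\<pi> (seq_take n x) \<in> words X n" using \<pi> S by (auto simp: permutes_in_image)
  then show "y \<in> cylset X n (\<pi> ` S)"
    using x seq_drop_in_cantor_space by (auto simp: cylset_def level_perm_def in_words_iff)
next
  fix y assume "y \<in> cylset X n (\<pi> ` S)"
  then obtain s where y: "y \<in> cantor_space X" "s \<in> S" "seq_take n y = \<pi> s"
    by (auto simp: cylset_def)
  have s: "s \<in> words X n" using S y(2) by blast
  have "y = level_perm X n \<pi> (conc s (seq_drop n y))"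
    using level_perm_conc[OF \<pi> s seq_drop_in_cantor_space[OF y(1), of n]] y(3)
    by (metis conc_seq_take_seq_drop)
  moreover have "conc s (seq_drop n y) \<in> cylset X n S"
    using s y(2) seq_drop_in_cantor_space[OF y(1)] by (simp add: cylset_def in_words_iff)
  ultimately show "y \<in> level_perm X n \<pi> ` cylset X n S" by blast
qed

definition on_cyl :: "'a set \<Rightarrow> 'a list \<Rightarrow> ((nat \<Rightarrow> 'a) \<Rightarrow> (nat \<Rightarrow> 'a)) \<Rightarrow> (nat \<Rightarrow> 'a) \<Rightarrow> (nat \<Rightarrow> 'a)" where
  "on_cyl X p g x =
     (if x \<in> cantor_space X \<and> seq_take (length p) x = p then conc p (g (seq_drop (length p) x)) else x)"

lemma on_cyl_conc: "set p \<subseteq> X \<Longrightarrow> s \<in> cantor_space X \<Longrightarrow> on_cyl X p g (conc p s) = conc p (g s)"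
  by (simp add: on_cyl_def)

lemma on_cyl_outside: "x \<notin> cantor_space X \<or> seq_take (length p) x \<noteq> p \<Longrightarrow> on_cyl X p g x = x"
  by (auto simp: on_cyl_def)

lemma image_on_cyl_other:
  assumes "set v \<subseteq> X" and "length p \<le> length v" and "take (length p) v \<noteq> p"
  shows "on_cyl X p g ` cyl X v = cyl X v"
proof -
  have "on_cyl X p g x = x" if "x \<in> cyl X v" for x
  proof -
    have "seq_take (length v) x = v" using that cyl_eq[OF assms(1)] by auto
    then have "seq_take (length p) x \<noteq> p" using assms(2,3) by (metis take_seq_take)
    then show ?thesis by (intro on_cyl_outside) simp
  qed
  then have "on_cyl X p g ` cyl X v = id ` cyl X v" by (intro image_cong) auto
  then show ?thesis by simp
qed

lemma on_cyl_in_cantor_space: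
  assumes "set p \<subseteq> X" and "f ` cantor_space X \<subseteq> cantor_space X" and "x \<in> cantor_space X"
  shows "on_cyl X p f x \<in> cantor_space X"
  using assms seq_drop_in_cantor_space[OF assms(3)] by (auto simp: on_cyl_def)

lemma on_cyl_cancel:
  assumes p: "set p \<subseteq> X" and x: "x \<in> cantor_space X"
    and cancel: "\<forall>y\<in>cantor_space X. f' (f y) = y" and f: "f ` cantor_space X \<subseteq> cantor_space X"
  shows "on_cyl X p f' (on_cyl X p f x) = x"
proof (cases "seq_take (length p) x = p")
  case True
  let ?s = "seq_drop (length p) x"
  have s: "?s \<in> cantor_space X" using seq_drop_in_cantor_space[OF x] .
  have x_eq: "x = conc p ?s" using True conc_seq_take_seq_drop by metis
  have "on_cyl X p f' (on_cyl X p f x) = on_cyl X p f' (conc p (f ?s))"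
    using on_cyl_conc[OF p s] x_eq by metis
  also have "\<dots> = conc p (f' (f ?s))" using on_cyl_conc[OF p] s f by blast
  also have "\<dots> = x" using x_eq s cancel by simp
  finally show ?thesis .
qed (simp add: on_cyl_outside)

lemma prefix_replacing_on_cyl:
  assumes p: "set p \<subseteq> X" and g: "prefix_replacing X n g"
  shows "prefix_replacing X (length p + n) (on_cyl X p g)"
  unfolding prefix_replacing_def
proof
  fix v assume v: "v \<in> words X (length p + n)"
  show "\<exists>c. set c \<subseteq> X \<and> (\<forall>w\<in>cantor_space X. on_cyl X p g (conc v w) = conc c w)"
  proof (cases "take (length p) v = p")
    case True
    obtain a where a: "set a \<subseteq> X" "\<forall>w\<in>cantor_space X. g (conc (drop (length p) v) w) = conc a w"
      using g drop_in_words[OF v] unfolding prefix_replacing_def by blast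
    have "on_cyl X p g (conc v w) = conc (p @ a) w" if "w \<in> cantor_space X" for w
    proof -
      have d: "conc (drop (length p) v) w \<in> cantor_space X"
        using drop_in_words[OF v] that by (simp add: in_words_iff)
      have "on_cyl X p g (conc v w) = on_cyl X p g (conc p (conc (drop (length p) v) w))"
        using True by (metis conc_take_conc_drop)
      also have "\<dots> = conc (p @ a) w" using on_cyl_conc[OF p d] a(2) that by (simp add: conc_append)
      finally show ?thesis .
    qed
    then show ?thesis using p a(1) by (intro exI[of _ "p @ a"]) simp
  next
    case False
    have "on_cyl X p g (conc v w) = conc v w" for w
      using False v by (intro on_cyl_outside) (simp add: seq_take_conc_le in_words_iff)
    then show ?thesis using v by (auto simp: in_words_iff)
  qed
qed

lemma on_cyl_in_HT:
  assumes X: "X \<noteq> {}" and "finite X" and p: "set p \<subseteq> X" and g: "g \<in> HT X"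
  shows "on_cyl X p g \<in> HT X"
proof -
  obtain n where bij: "bij_betw g (cantor_space X) (cantor_space X)"
    and id: "\<forall>x. x \<notin> cantor_space X \<longrightarrow> g x = x" and gn: "prefix_replacing X n g"
    using g unfolding HT_iff[OF X \<open>finite X\<close>] by blast
  note inv = cantor_inv_inverse[OF bij id]
  have maps: "g ` cantor_space X \<subseteq> cantor_space X" "cantor_inv X g ` cantor_space X \<subseteq> cantor_space X"
    using bij inv(3) bij_betw_imp_surj_on by blast+
  have "bij_betw (on_cyl X p g) (cantor_space X) (cantor_space X)"
    by (rule bij_betw_byWitness[where f' = "on_cyl X p (cantor_inv X g)"])
      (use on_cyl_cancel[OF p] on_cyl_in_cantor_space[OF p] maps inv(1,2) in \<open>auto simp: pointfree_idE\<close>)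
  then show ?thesis
    using prefix_replacing_on_cyl[OF p gn] unfolding HT_iff[OF X \<open>finite X\<close>] by (auto simp: on_cyl_outside)
qed

text \<open>\<open>collapse a b\<close> maps \<open>aaX\<^sup>\<omega>\<close> onto \<open>aX\<^sup>\<omega>\<close>, \<open>ayX\<^sup>\<omega>\<close> (\<open>y \<noteq> a\<close>) onto \<open>byX\<^sup>\<omega>\<close> and \<open>bX\<^sup>\<omega>\<close>
  onto \<open>baX\<^sup>\<omega>\<close>, fixing the rest.\<close>

definition collapse :: "'a \<Rightarrow> 'a \<Rightarrow> (nat \<Rightarrow> 'a) \<Rightarrow> (nat \<Rightarrow> 'a)" where
  "collapse a b s =
     (if s 0 = a then (if s 1 = a then conc [a] (seq_drop 2 s) else conc [b] (seq_drop 1 s))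
      else if s 0 = b then conc [b, a] (seq_drop 1 s) else s)"

definition uncollapse :: "'a \<Rightarrow> 'a \<Rightarrow> (nat \<Rightarrow> 'a) \<Rightarrow> (nat \<Rightarrow> 'a)" where
  "uncollapse a b s =
     (if s 0 = a then conc [a, a] (seq_drop 1 s)
      else if s 0 = b then (if s 1 = a then conc [b] (seq_drop 2 s) else conc [a] (seq_drop 1 s))
      else s)"

lemma collapse_uncollapse: "a \<noteq> b \<Longrightarrow> collapse a b (uncollapse a b s) = s"
  by (cases "s 0 = a"; cases "s 0 = b"; cases "s 1 = a")
    (auto simp: collapse_def uncollapse_def conc_Cons seq_drop_def fun_eq_iff le_Suc_eq
      numeral_2_eq_2 Suc_diff_Suc)

lemma uncollapse_collapse: "a \<noteq> b \<Longrightarrow> uncollapse a b (collapse a b s) = s"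
  by (cases "s 0 = a"; cases "s 0 = b"; cases "s 1 = a")
    (auto simp: collapse_def uncollapse_def conc_Cons seq_drop_def fun_eq_iff le_Suc_eq
      numeral_2_eq_2 Suc_diff_Suc)

lemma collapse_conc2:
  "a \<noteq> b \<Longrightarrow> collapse a b (conc [x, y] w) =
     conc (if x = a then if y = a then [a] else [b, y] else if x = b then [b, a, y] else [x, y]) w"
  by (cases "x = a"; cases "y = a"; cases "x = b")
    (auto simp: collapse_def conc_Cons seq_drop_def fun_eq_iff le_Suc_eq numeral_2_eq_2 Suc_diff_Suc)

definition collapse_map :: "'a set \<Rightarrow> 'a \<Rightarrow> 'a \<Rightarrow> (nat \<Rightarrow> 'a) \<Rightarrow> (nat \<Rightarrow> 'a)" where
  "collapse_map X a b x = (if x \<in> cantor_space X then collapse a b x else x)"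

lemma collapse_map_in_HT:
  assumes X: "X \<noteq> {}" and "finite X" and ab: "a \<in> X" "b \<in> X" "a \<noteq> b"
  shows "collapse_map X a b \<in> HT X"
proof -
  have maps: "collapse a b s \<in> cantor_space X" "uncollapse a b s \<in> cantor_space X"
    if "s \<in> cantor_space X" for s
    using that ab seq_drop_in_cantor_space[OF that] by (simp_all add: collapse_def uncollapse_def)
  have "bij_betw (collapse_map X a b) (cantor_space X) (cantor_space X)"
    by (rule bij_betw_byWitness[where f' = "uncollapse a b"])
      (use maps collapse_uncollapse[OF ab(3)] uncollapse_collapse[OF ab(3)] in \<open>auto simp: collapse_map_def\<close>)
  moreover have "prefix_replacing X 2 (collapse_map X a b)"
    unfolding prefix_replacing_def
  proof
    fix v assume "v \<in> words X 2"
    then obtain x y where v: "v = [x, y]" "x \<in> X" "y \<in> X"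
      by (auto simp: in_words_iff numeral_2_eq_2 length_Suc_conv)
    let ?c = "if x = a then if y = a then [a] else [b, y] else if x = b then [b, a, y] else [x, y]"
    have "collapse_map X a b (conc v w) = conc ?c w" if "w \<in> cantor_space X" for w
      using that v collapse_conc2[OF ab(3)] by (simp add: collapse_map_def)
    moreover have "set ?c \<subseteq> X" using v ab by simp
    ultimately show "\<exists>c. set c \<subseteq> X \<and> (\<forall>w\<in>cantor_space X. collapse_map X a b (conc v w) = conc c w)"
      by blast
  qed
  ultimately show ?thesis unfolding HT_iff[OF X \<open>finite X\<close>] by (auto simp: collapse_map_def)
qed

lemma image_on_cyl_collapse_map:
  assumes p: "set p \<subseteq> X" and a: "a \<in> X" and ab: "a \<noteq> b"
  shows "on_cyl X p (collapse_map X a b) ` cyl X (p @ [a, a]) = cyl X (p @ [a])"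
proof (rule image_cyl, intro ballI)
  fix w assume w: "w \<in> cantor_space X"
  then have "conc [a, a] w \<in> cantor_space X" using a by simp
  then have "on_cyl X p (collapse_map X a b) (conc p (conc [a, a] w)) = conc p (conc [a] w)"
    using on_cyl_conc[OF p] collapse_conc2[OF ab, of a a w] by (simp add: collapse_map_def)
  then show "on_cyl X p (collapse_map X a b) (conc (p @ [a, a]) w) = conc (p @ [a]) w"
    by (simp add: conc_append)
qed

lemma commutator_swap_apply:
  assumes X: "X \<noteq> {}" and "finite X" and g: "g \<in> HT X"
    and supp: "\<And>y. seq_take n y \<noteq> p \<Longrightarrow> g y = y"
    and p: "p \<in> words X n" and q: "q \<in> words X n" and "p \<noteq> q"
    and x: "x \<notin> cantor_space X \<or> seq_take n x \<noteq> q"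
  shows "(g \<circ> level_perm X n (Transposition.transpose p q) \<circ> cantor_inv X g \<circ>
      level_perm X n (Transposition.transpose p q)) x = g x"
proof -
  let ?\<sigma> = "level_perm X n (Transposition.transpose p q)"
  have \<tau>: "Transposition.transpose p q permutes words X n" using p q by (rule permutes_swap_id)
  have inv_fix: "cantor_inv X g y = y" if "seq_take n y \<noteq> p" for y
    using supp[OF that] HT_cantor_inv(2)[OF X \<open>finite X\<close> g] by (metis comp_apply id_apply)
  show ?thesis
  proof (cases "x \<in> cantor_space X \<and> seq_take n x = p")
    case True
    have d: "seq_drop n x \<in> cantor_space X" using True seq_drop_in_cantor_space by blast
    have x_eq: "x = conc p (seq_drop n x)" using True by (metis conc_seq_take_seq_drop)
    have "?\<sigma> x = conc q (seq_drop n x)"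
      using level_perm_conc[OF \<tau> p d] x_eq by simp
    moreover have "cantor_inv X g (conc q (seq_drop n x)) = conc q (seq_drop n x)"
      using inv_fix \<open>p \<noteq> q\<close> q by (simp add: in_words_iff)
    moreover have "?\<sigma> (conc q (seq_drop n x)) = x"
      using level_perm_conc[OF \<tau> q d] x_eq by simp
    ultimately show ?thesis by simp
  next
    case False
    then have "?\<sigma> x = x" using x by (auto simp: level_perm_def)
    moreover have "cantor_inv X g x = x"
      using False inv_fix[of x] by (cases "x \<in> cantor_space X") (simp_all add: cantor_inv_def)
    ultimately show ?thesis by simp
  qed
qed

section \<open>Orbits of the commutator subgroup\<close>

lemma transpose_commutator_apply:
  assumes "u \<noteq> v" "u \<noteq> w" "v \<noteq> w"
  shows "Transposition.transpose u v (Transposition.transpose u w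
      (Transposition.transpose u v (Transposition.transpose u w x))) =
    (if x = u then v else if x = v then w else if x = w then u else x)"
  using assms by (simp add: Transposition.transpose_def)

lemma image_transpose_commutator_notin:
  assumes "u \<in> S" "v \<notin> S" "w \<notin> S" and uvw: "u \<noteq> v" "u \<noteq> w" "v \<noteq> w"
  shows "(Transposition.transpose u v \<circ> Transposition.transpose u w \<circ>
      Transposition.transpose u v \<circ> Transposition.transpose u w) ` S = insert v (S - {u})"
    (is "?c ` S = _")
proof (intro equalityI subsetI)
  fix y assume "y \<in> ?c ` S"
  then obtain x where "x \<in> S" "y = ?c x" by blast
  then show "y \<in> insert v (S - {u})"
    using assms by (auto simp: transpose_commutator_apply[OF uvw])
next
  fix y assume y: "y \<in> insert v (S - {u})"
  let ?x = "if y = v then u else y"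
  have "y = ?c ?x" "?x \<in> S" using assms y by (auto simp: transpose_commutator_apply[OF uvw])
  then show "y \<in> ?c ` S" by blast
qed

lemma image_transpose_commutator_in:
  assumes "u \<in> S" "v \<notin> S" "w \<in> S" and uvw: "u \<noteq> v" "u \<noteq> w" "v \<noteq> w"
  shows "(Transposition.transpose u w \<circ> Transposition.transpose u v \<circ>
      Transposition.transpose u w \<circ> Transposition.transpose u v) ` S = insert v (S - {u})"
    (is "?c ` S = _")
proof (intro equalityI subsetI)
  note c = transpose_commutator_apply[OF uvw(2,1) uvw(3)[symmetric]]
  fix y assume "y \<in> ?c ` S"
  then obtain x where "x \<in> S" "y = ?c x" by blast
  then show "y \<in> insert v (S - {u})" using assms by (auto simp: c)
next
  note c = transpose_commutator_apply[OF uvw(2,1) uvw(3)[symmetric]]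
  fix y assume y: "y \<in> insert v (S - {u})"
  let ?x = "if y = v then w else if y = w then u else y"
  have "y = ?c ?x" "?x \<in> S" using assms y by (auto simp: c)
  then show "y \<in> ?c ` S" by blast
qed

lemma same_orbit_move_word:
  assumes X: "X \<noteq> {}" and "finite X" and S: "S \<subseteq> words X n" and u: "u \<in> S"
    and v: "v \<in> words X n" "v \<notin> S" and w: "w \<in> words X n" "w \<noteq> u" "w \<noteq> v"
  shows "same_orbit (HT_comm X) (cylset X n S) (cylset X n (insert v (S - {u})))"
proof -
  have uvw: "u \<noteq> v" "u \<noteq> w" "v \<noteq> w" using u v w by auto
  have u': "u \<in> words X n" using S u by blast
  obtain a b where ab: "a \<in> words X n" "b \<in> words X n"
    and img: "(Transposition.transpose u a \<circ> Transposition.transpose u b \<circ>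
       Transposition.transpose u a \<circ> Transposition.transpose u b) ` S = insert v (S - {u})"
  proof (cases "w \<in> S")
    case True
    then show thesis using image_transpose_commutator_in[OF u v(2) True uvw] that w(1) v(1) by blast
  next
    case False
    then show thesis using image_transpose_commutator_notin[OF u v(2) False uvw] that w(1) v(1) by blast
  qed
  let ?\<pi> = "Transposition.transpose u a" and ?\<rho> = "Transposition.transpose u b"
  have perm: "?\<pi> permutes words X n" "?\<rho> permutes words X n"
    using u' ab by (simp_all add: permutes_swap_id)
  have "level_perm X n (?\<pi> \<circ> ?\<rho> \<circ> ?\<pi> \<circ> ?\<rho>) \<in> HT_comm X"
    using level_perm_commutator_in_HT_comm[OF X \<open>finite X\<close> perm] by simp
  moreover have "level_perm X n (?\<pi> \<circ> ?\<rho> \<circ> ?\<pi> \<circ> ?\<rho>) ` cylset X n S = cylset X n (insert v (S - {u}))"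
    using image_level_perm_cylset[OF _ S] perm img by (simp add: permutes_compose)
  ultimately show ?thesis unfolding same_orbit_def by blast
qed

lemma same_orbit_cylset_card:
  assumes X: "X \<noteq> {}" and "finite X" and three: "3 \<le> card (words X n)"
    and S: "S \<subseteq> words X n" and T: "T \<subseteq> words X n" and card: "card S = card T"
  shows "same_orbit (HT_comm X) (cylset X n S) (cylset X n T)"
  using S card
proof (induction "card (S - T)" arbitrary: S)
  case 0
  then have "S = T"
    using finite_subset_words[OF \<open>finite X\<close>] T by (metis Diff_eq_empty_iff card_0_eq card_subset_eq finite_Diff)
  then show ?case using same_orbit_refl HT_comm_closed(1)[OF X \<open>finite X\<close>] by blast
next
  case (Suc k)
  have fin: "finite S" "finite T" using Suc.prems(1) T finite_subset_words[OF \<open>finite X\<close>] by auto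
  obtain u where u: "u \<in> S" "u \<notin> T" using Suc.hyps(2) by (metis Diff_iff card.empty ex_in_conv nat.distinct(1))
  have "\<not> T \<subseteq> S" using card_subset_eq[OF fin(1)] Suc.prems(2) u by metis
  then obtain v where v: "v \<in> T" "v \<notin> S" by blast
  have "card {u, v} \<le> 2" by (simp add: card_insert_if)
  then have "\<not> words X n \<subseteq> {u, v}"
    using card_mono[of "{u, v}" "words X n"] three by auto
  then obtain w where w: "w \<in> words X n" "w \<noteq> u" "w \<noteq> v" by blast
  define S' where "S' = insert v (S - {u})"
  have "same_orbit (HT_comm X) (cylset X n S) (cylset X n S')"
    unfolding S'_def using same_orbit_move_word[OF X \<open>finite X\<close> Suc.prems(1) u(1) _ v(2) w] T v(1) by blast
  moreover have "same_orbit (HT_comm X) (cylset X n S') (cylset X n T)"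
  proof (rule Suc.hyps(1))
    show "k = card (S' - T)" using Suc.hyps(2) u v by (simp add: S'_def Diff_insert2 [symmetric] card_Diff1_less)
    show "S' \<subseteq> words X n" using Suc.prems(1) T v(1) by (auto simp: S'_def)
    show "card S' = card T"
      using Suc.prems(2) fin(1) v(2) card_Suc_Diff1[OF fin(1) u(1)] by (simp add: S'_def)
  qed
  ultimately show ?case using same_orbit_trans HT_comm_closed(2)[OF X \<open>finite X\<close>] by blast
qed

text \<open>The commutator of \<open>on_cyl X p (collapse_map X a b)\<close> with the swap of the cylinders \<open>p X\<^sup>\<omega>\<close>
  and \<open>q X\<^sup>\<omega>\<close> acts like the former away from \<open>q X\<^sup>\<omega>\<close>; it replaces the cylinder \<open>paa X\<^sup>\<omega>\<close> by \<open>pa X\<^sup>\<omega>\<close>,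
  which at depth \<open>n + 2\<close> consists of \<open>|X|\<close> cylinders.\<close>

lemma same_orbit_expand_cyl:
  assumes X: "X \<noteq> {}" and "finite X" and p: "p \<in> words X n" and q: "q \<in> words X n" and "p \<noteq> q"
    and ab: "a \<in> X" "b \<in> X" "a \<noteq> b"
    and T: "T \<subseteq> words X (n + 2)" and away: "\<forall>v\<in>T. take n v \<noteq> p \<and> take n v \<noteq> q"
  shows "same_orbit (HT_comm X) (cylset X (n + 2) (insert (p @ [a, a]) T))
           (cylset X (n + 2) (T \<union> (\<lambda>z. p @ [a, z]) ` X))"
proof -
  have pX: "set p \<subseteq> X" "length p = n" using p by (simp_all add: in_words_iff)
  define g where "g = on_cyl X p (collapse_map X a b)"
  define \<sigma> where "\<sigma> = level_perm X n (Transposition.transpose p q)"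
  have \<tau>: "Transposition.transpose p q permutes words X n" using p q by (rule permutes_swap_id)
  have g_HT: "g \<in> HT X"
    unfolding g_def using on_cyl_in_HT[OF X \<open>finite X\<close> pX(1) collapse_map_in_HT[OF X \<open>finite X\<close> ab]] .
  have g_fix: "g y = y" if "seq_take n y \<noteq> p" for y
    unfolding g_def using that pX(2) by (intro on_cyl_outside) auto
  have comm: "g \<circ> \<sigma> \<circ> cantor_inv X g \<circ> \<sigma> \<in> HT_comm X"
    using commutator_in_HT_comm[OF X \<open>finite X\<close> g_HT level_perm_in_HT[OF X \<open>finite X\<close> \<tau>]]
      cantor_inv_level_perm[OF X \<open>finite X\<close> \<tau>] by (simp add: \<sigma>_def)
  have agree: "(g \<circ> \<sigma> \<circ> cantor_inv X g \<circ> \<sigma>) x = g x" if "x \<notin> cantor_space X \<or> seq_take n x \<noteq> q" for x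
    unfolding \<sigma>_def using commutator_swap_apply[OF X \<open>finite X\<close> g_HT g_fix p q \<open>p \<noteq> q\<close> that] .
  define U where "U = cylset X (n + 2) (insert (p @ [a, a]) T)"
  have UT: "insert (p @ [a, a]) T \<subseteq> words X (n + 2)" using T pX ab(1) by (simp add: in_words_iff)
  have "x \<notin> cantor_space X \<or> seq_take n x \<noteq> q" if "x \<in> U" for x
  proof -
    have "seq_take n x = take n (seq_take (n + 2) x)" by (simp add: take_seq_take)
    then show ?thesis using that away \<open>p \<noteq> q\<close> pX(2) by (auto simp: U_def cylset_def)
  qed
  then have "(g \<circ> \<sigma> \<circ> cantor_inv X g \<circ> \<sigma>) ` U = g ` U"
    using agree by (auto intro: image_cong)
  also have "\<dots> = g ` cyl X (p @ [a, a]) \<union> (\<Union>v\<in>T. g ` cyl X v)"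
    unfolding U_def cylset_eq_UN[OF UT] by (simp add: image_Un image_UN)
  also have "\<dots> = cyl X (p @ [a]) \<union> (\<Union>v\<in>T. cyl X v)"
  proof -
    have "g ` cyl X v = cyl X v" if "v \<in> T" for v
      unfolding g_def using that T away pX(2) by (intro image_on_cyl_other) (auto simp: subset_words_iff)
    then show ?thesis using image_on_cyl_collapse_map[OF pX(1) ab(1,3)] by (simp add: g_def)
  qed
  also have "\<dots> = cylset X (n + 2) (T \<union> (\<lambda>z. p @ [a, z]) ` X)"
    using cylset_snoc_image[of "p @ [a]" X "n + 1"] pX ab(1) cylset_eq_UN[OF T]
    by (simp add: cylset_Un Un_commute)
  finally show ?thesis using comm unfolding same_orbit_def U_def by blast
qed

lemma obtain_two_elements:
  assumes "2 \<le> card A" obtains a b where "a \<in> A" "b \<in> A" "a \<noteq> b"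
proof -
  obtain B where "B \<subseteq> A" "card B = 2" using obtain_subset_with_card_n[OF assms] by blast
  then show thesis using that card_2_iff by (metis insert_subset)
qed

lemma twice_square_le_cube: "2 \<le> (d::nat) \<Longrightarrow> 2 * d ^ 2 \<le> d ^ 3 + (d - 1)"
proof -
  assume d: "2 \<le> d"
  have "2 * d ^ 2 + 1 \<le> d ^ 3 + d"
  proof -
    have "(2::int) * int d ^ 2 + 1 \<le> int d ^ 3 + int d"
    proof -
      have "1 \<le> int d - 1" using d by simp
      then have "1 * 1 \<le> (int d - 1) ^ 2" unfolding power2_eq_square by (intro mult_mono) auto
      then have "int d * (int d - 1) ^ 2 \<ge> 2 * 1"
        using d by (intro mult_mono) auto
      then show ?thesis by (simp add: power2_eq_square power3_eq_cube algebra_simps)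
    qed
    then have "int (2 * d ^ 2 + 1) \<le> int (d ^ 3 + d)" by simp
    then show ?thesis by (simp only: of_nat_le_iff)
  qed
  then show ?thesis using d by linarith
qed

lemma words_avoiding_prefixes:
  assumes "finite X" and "p \<in> words X n" and "q \<in> words X n"
    and "k + 2 * card X ^ 2 \<le> card X ^ (n + 2)"
  obtains T where "T \<subseteq> words X (n + 2)" and "card T = k" and "finite T"
    and "\<forall>v\<in>T. take n v \<noteq> p \<and> take n v \<noteq> q"
proof -
  define B where "B r = extend_words X n 2 {r}" for r
  have B_words: "B r \<subseteq> words X (n + 2)" for r
    unfolding B_def by (rule extend_words_subset)
  have "card (B r) = card X ^ 2" if "r \<in> words X n" for r
    using card_extend_words[OF \<open>finite X\<close>, of "{r}" n 2] that by (simp add: B_def)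
  then have "card (B p \<union> B q) \<le> 2 * card X ^ 2"
    using card_Un_le[of "B p" "B q"] assms(2,3) by simp
  moreover have sub: "B p \<union> B q \<subseteq> words X (n + 2)" using B_words by blast
  then have "card (words X (n + 2) - (B p \<union> B q)) = card X ^ (n + 2) - card (B p \<union> B q)"
    using card_Diff_subset[OF finite_subset_words[OF \<open>finite X\<close> sub] sub] card_words[OF \<open>finite X\<close>]
    by simp
  ultimately have "k \<le> card (words X (n + 2) - (B p \<union> B q))" using assms(4) by linarith
  then obtain T where T: "T \<subseteq> words X (n + 2) - (B p \<union> B q)" "card T = k" "finite T"
    by (rule obtain_subset_with_card_n)
  then show thesis using that by (auto simp: B_def extend_words_def)
qed

lemma same_orbit_add_card:
  assumes "finite X" and d: "2 \<le> card X" and n: "1 \<le> n" and S: "S \<subseteq> words X (n + 2)" "S \<noteq> {}"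
    and bound: "card S + 2 * card X ^ 2 \<le> card X ^ (n + 2)"
  obtains S' where "S' \<subseteq> words X (n + 2)" and "card S' = card S + (card X - 1)"
    and "same_orbit (HT_comm X) (cylset X (n + 2) S) (cylset X (n + 2) S')"
proof -
  have X: "X \<noteq> {}" using d by auto
  have card_S: "1 \<le> card S" using S finite_subset_words[OF \<open>finite X\<close> S(1)] by (simp add: Suc_le_eq card_gt_0_iff)
  obtain a b where ab: "a \<in> X" "b \<in> X" "a \<noteq> b" using obtain_two_elements[OF d] .
  have "card X ^ 1 \<le> card X ^ n" using n d by (intro power_increasing) auto
  then obtain p q where pq: "p \<in> words X n" "q \<in> words X n" "p \<noteq> q"
    using obtain_two_elements[of "words X n"] card_words[OF \<open>finite X\<close>] d by auto
  have pX: "set p \<subseteq> X" "length p = n" using pq(1) by (simp_all add: in_words_iff)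
  have "card S - 1 + 2 * card X ^ 2 \<le> card X ^ (n + 2)" using bound by linarith
  then obtain T where T: "T \<subseteq> words X (n + 2)" "card T = card S - 1" "finite T"
      and away: "\<forall>v\<in>T. take n v \<noteq> p \<and> take n v \<noteq> q"
    by (rule words_avoiding_prefixes[OF \<open>finite X\<close> pq(1,2)])
  have "p @ [a, a] \<notin> T" using away pX(2) by auto
  then have "card (insert (p @ [a, a]) T) = card S" using T(2,3) card_S by simp
  moreover have "insert (p @ [a, a]) T \<subseteq> words X (n + 2)" using T(1) pX ab by (simp add: in_words_iff)
  ultimately have "same_orbit (HT_comm X) (cylset X (n + 2) S) (cylset X (n + 2) (insert (p @ [a, a]) T))"
    using same_orbit_cylset_card[OF X \<open>finite X\<close> three_le_card_words[OF \<open>finite X\<close> d] S(1)] by simp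
  moreover have "same_orbit (HT_comm X) (cylset X (n + 2) (insert (p @ [a, a]) T))
      (cylset X (n + 2) (T \<union> (\<lambda>z. p @ [a, z]) ` X))"
    using same_orbit_expand_cyl[OF X \<open>finite X\<close> pq ab T(1) away] .
  moreover have "T \<union> (\<lambda>z. p @ [a, z]) ` X \<subseteq> words X (n + 2)" using T(1) pX ab(1) by (auto simp: in_words_iff)
  moreover have "card (T \<union> (\<lambda>z. p @ [a, z]) ` X) = card S + (card X - 1)"
  proof -
    have "card ((\<lambda>z. p @ [a, z]) ` X) = card X" by (rule card_image) (auto simp: inj_on_def)
    moreover have "T \<inter> (\<lambda>z. p @ [a, z]) ` X = {}" using away pX(2) by auto
    ultimately show ?thesis
      using card_Un_disjoint[OF T(3)] \<open>finite X\<close> T(2) card_S d by simp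
  qed
  ultimately show thesis
    using that same_orbit_trans[OF HT_comm_closed(2)[OF X \<open>finite X\<close>]] by blast
qed

lemma same_orbit_add_multiple:
  assumes "finite X" and d: "2 \<le> card X" and n: "1 \<le> n" and S: "S \<subseteq> words X (n + 2)" "S \<noteq> {}"
  shows "card S + t * (card X - 1) + card X ^ 3 \<le> card X ^ (n + 2) \<Longrightarrow>
    \<exists>S'. S' \<subseteq> words X (n + 2) \<and> card S' = card S + t * (card X - 1) \<and>
      same_orbit (HT_comm X) (cylset X (n + 2) S) (cylset X (n + 2) S')"
proof (induction t)
  case 0
  have "X \<noteq> {}" using d by auto
  then show ?case using S(1) same_orbit_refl HT_comm_closed(1)[OF _ \<open>finite X\<close>]
    by (intro exI[of _ S]) simp
next
  case (Suc t)
  have X: "X \<noteq> {}" using d by auto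
  have "card S + t * (card X - 1) + card X ^ 3 \<le> card X ^ (n + 2)"
    using Suc.prems mult_Suc[of t "card X - 1"] by linarith
  then obtain S1 where S1: "S1 \<subseteq> words X (n + 2)" "card S1 = card S + t * (card X - 1)"
      "same_orbit (HT_comm X) (cylset X (n + 2) S) (cylset X (n + 2) S1)"
    using Suc.IH by blast
  have "S1 \<noteq> {}"
    using S S1(2) finite_subset_words[OF \<open>finite X\<close> S(1)] by auto
  moreover have "card S1 + (card X - 1) + card X ^ 3 \<le> card X ^ (n + 2)"
    using Suc.prems S1(2) mult_Suc[of t "card X - 1"] by linarith
  then have "card S1 + 2 * card X ^ 2 \<le> card X ^ (n + 2)"
    using twice_square_le_cube[OF d] by linarith
  ultimately obtain S2 where S2: "S2 \<subseteq> words X (n + 2)" "card S2 = card S1 + (card X - 1)"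
      "same_orbit (HT_comm X) (cylset X (n + 2) S1) (cylset X (n + 2) S2)"
    using same_orbit_add_card[OF \<open>finite X\<close> d n S1(1)] by blast
  moreover have "card S2 = card S + Suc t * (card X - 1)" using S1(2) S2(2) by simp
  ultimately show ?case
    using S1(3) same_orbit_trans[OF HT_comm_closed(2)[OF X \<open>finite X\<close>]] by blast
qed

lemma same_orbit_cylset_cong:
  assumes "finite X" and d: "2 \<le> card X" and n: "1 \<le> n"
    and T: "T1 \<subseteq> words X (n + 2)" "T2 \<subseteq> words X (n + 2)" "T1 \<noteq> {}" "T2 \<noteq> {}"
    and bound: "card T1 + card X ^ 3 \<le> card X ^ (n + 2)" "card T2 + card X ^ 3 \<le> card X ^ (n + 2)"
    and cong: "[card T1 = card T2] (mod (card X - 1))"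
  shows "same_orbit (HT_comm X) (cylset X (n + 2) T1) (cylset X (n + 2) T2)"
proof -
  have X: "X \<noteq> {}" using d by auto
  have ascending: "same_orbit (HT_comm X) (cylset X (n + 2) T) (cylset X (n + 2) T')"
    if T: "T \<subseteq> words X (n + 2)" "T' \<subseteq> words X (n + 2)" "T \<noteq> {}" and le: "card T \<le> card T'"
      and bound: "card T' + card X ^ 3 \<le> card X ^ (n + 2)" and cong: "[card T = card T'] (mod (card X - 1))"
    for T T'
  proof -
    have "(card X - 1) dvd (card T' - card T)"
      using cong_altdef_nat[OF le] cong_sym[OF cong] by blast
    then obtain t where t: "card T' - card T = (card X - 1) * t" ..
    then have t': "card T' = card T + t * (card X - 1)" using le by (simp add: mult.commute)
    have "card T + t * (card X - 1) + card X ^ 3 \<le> card X ^ (n + 2)" using bound t' by simp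
    then obtain S' where S': "S' \<subseteq> words X (n + 2)" "card S' = card T'"
        "same_orbit (HT_comm X) (cylset X (n + 2) T) (cylset X (n + 2) S')"
      using same_orbit_add_multiple[OF \<open>finite X\<close> d n T(1,3)] t' by metis
    have "same_orbit (HT_comm X) (cylset X (n + 2) S') (cylset X (n + 2) T')"
      using same_orbit_cylset_card[OF X \<open>finite X\<close> three_le_card_words[OF \<open>finite X\<close> d] S'(1) T(2) S'(2)]
      by simp
    then show ?thesis
      using S'(3) same_orbit_trans[OF HT_comm_closed(2)[OF X \<open>finite X\<close>]] by blast
  qed
  show ?thesis
  proof (cases "card T1 \<le> card T2")
    case True
    show ?thesis by (rule ascending[OF T(1,2,3) True bound(2) cong])
  next
    case False
    then have "same_orbit (HT_comm X) (cylset X (n + 2) T2) (cylset X (n + 2) T1)"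
      using ascending[OF T(2,1,4) _ bound(1) cong_sym[OF cong]] by simp
    then show ?thesis using same_orbit_sym[OF HT_comm_closed(3)[OF X \<open>finite X\<close>]] by blast
  qed
qed

lemma proper_clopen_at_depth:
  assumes "finite X" and d: "2 \<le> card X"
    and U: "clopen_in X U" "U \<noteq> {}" "U \<noteq> cantor_space X"
  obtains m where "\<And>k. m \<le> k \<Longrightarrow> \<exists>T. T \<subseteq> words X k \<and> U = cylset X k T \<and> T \<noteq> {} \<and>
      card T + card X ^ (k - m) \<le> card X ^ k"
proof -
  obtain m S where S: "S \<subseteq> words X m" "U = cylset X m S"
    using clopen_in_eq_cylset[OF \<open>finite X\<close> U(1)] .
  have "S \<noteq> {}" using S U(2) by (auto simp: cylset_def)
  have "S \<noteq> words X m" using S U(3) cylset_words by metis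
  then have "card S < card X ^ m"
    using S(1) psubset_card_mono[OF finite_words[OF \<open>finite X\<close>]] card_words[OF \<open>finite X\<close>] by auto
  have "\<exists>T. T \<subseteq> words X k \<and> U = cylset X k T \<and> T \<noteq> {} \<and> card T + card X ^ (k - m) \<le> card X ^ k"
    if "m \<le> k" for k
  proof (intro exI conjI)
    let ?T = "extend_words X m (k - m) S"
    show "?T \<subseteq> words X k" using extend_words_subset[of X m "k - m" S] that by simp
    show "U = cylset X k ?T" using S(2) cylset_extend_words[of X m "k - m" S] that by simp
    have card_T: "card ?T = card S * card X ^ (k - m)"
      using card_extend_words[OF \<open>finite X\<close> S(1)] .
    have "0 < card S" using \<open>S \<noteq> {}\<close> finite_subset_words[OF \<open>finite X\<close> S(1)] by auto
    then show "?T \<noteq> {}" using card_T d by (metis card.empty mult_is_0 not_gr0 power_not_zero zero_neq_numeral le_zero_eq)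
    have "(card S + 1) * card X ^ (k - m) \<le> card X ^ m * card X ^ (k - m)"
      using \<open>card S < card X ^ m\<close> by (intro mult_le_mono1) simp
    then show "card ?T + card X ^ (k - m) \<le> card X ^ k"
      using card_T that by (simp add: algebra_simps flip: power_add)
  qed
  then show thesis using that by blast
qed

lemma same_orbit_HT_comm_if_mres_eq:
  assumes "finite X" and d: "2 \<le> card X"
    and U1: "clopen_in X U1" "U1 \<noteq> {}" "U1 \<noteq> cantor_space X"
    and U2: "clopen_in X U2" "U2 \<noteq> {}" "U2 \<noteq> cantor_space X"
    and m: "mres X U1 = mres X U2"
  shows "same_orbit (HT_comm X) U1 U2"
proof -
  obtain m1 where m1: "\<And>k. m1 \<le> k \<Longrightarrow> \<exists>T. T \<subseteq> words X k \<and> U1 = cylset X k T \<and> T \<noteq> {} \<and>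
      card T + card X ^ (k - m1) \<le> card X ^ k"
    using proper_clopen_at_depth[OF \<open>finite X\<close> d U1] by blast
  obtain m2 where m2: "\<And>k. m2 \<le> k \<Longrightarrow> \<exists>T. T \<subseteq> words X k \<and> U2 = cylset X k T \<and> T \<noteq> {} \<and>
      card T + card X ^ (k - m2) \<le> card X ^ k"
    using proper_clopen_at_depth[OF \<open>finite X\<close> d U2] by blast
  define n where "n = m1 + m2 + 1"
  have k: "m1 \<le> n + 2" "3 \<le> n + 2 - m1" "m2 \<le> n + 2" "3 \<le> n + 2 - m2" "1 \<le> n"
    by (simp_all add: n_def)
  obtain T1 where T1: "T1 \<subseteq> words X (n + 2)" "U1 = cylset X (n + 2) T1" "T1 \<noteq> {}"
      "card T1 + card X ^ (n + 2 - m1) \<le> card X ^ (n + 2)"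
    using m1[OF k(1)] by blast
  obtain T2 where T2: "T2 \<subseteq> words X (n + 2)" "U2 = cylset X (n + 2) T2" "T2 \<noteq> {}"
      "card T2 + card X ^ (n + 2 - m2) \<le> card X ^ (n + 2)"
    using m2[OF k(3)] by blast
  have "card X ^ 3 \<le> card X ^ (n + 2 - m1)" "card X ^ 3 \<le> card X ^ (n + 2 - m2)"
    using d k(2,4) by (simp_all add: power_increasing)
  then have "card T1 + card X ^ 3 \<le> card X ^ (n + 2)" "card T2 + card X ^ 3 \<le> card X ^ (n + 2)"
    using T1(4) T2(4) by linarith+
  moreover have "[card T1 = card T2] (mod (card X - 1))"
    using m mres_cylset[OF \<open>finite X\<close> d T1(1)] mres_cylset[OF \<open>finite X\<close> d T2(1)] T1(2) T2(2)
    by (simp add: cong_def)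
  ultimately show ?thesis
    using same_orbit_cylset_cong[OF \<open>finite X\<close> d k(5) T1(1) T2(1) T1(3) T2(3)] T1(2) T2(2)
    by simp
qed

theorem proposition4p5:
  fixes X :: "'a set"
  assumes "finite X" and "card X \<ge> 2"
  shows "(\<forall>U vs1 vs2. clopen_in X U \<and> decomp X U vs1 \<and> decomp X U vs2 \<longrightarrow>
            [length vs1 = length vs2] (mod (card X - 1)))
       \<and> (\<forall>U1 U2. clopen_in X U1 \<and> clopen_in X U2 \<and>
            U1 \<noteq> {} \<and> U2 \<noteq> {} \<and>
            U1 \<noteq> topspace (cantor_top X) \<and> U2 \<noteq> topspace (cantor_top X) \<longrightarrow>
            (same_orbit (HT X) U1 U2 \<longleftrightarrow> same_orbit (HT_comm X) U1 U2) \<and>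
            (same_orbit (HT_comm X) U1 U2 \<longleftrightarrow> mres X U1 = mres X U2))"
proof (intro conjI allI impI)
  fix U vs1 vs2 assume "clopen_in X U \<and> decomp X U vs1 \<and> decomp X U vs2"
  then show "[length vs1 = length vs2] (mod (card X - 1))"
    using decomp_length_cong[OF assms] by blast
next
  fix U1 U2
  assume "clopen_in X U1 \<and> clopen_in X U2 \<and> U1 \<noteq> {} \<and> U2 \<noteq> {} \<and>
    U1 \<noteq> topspace (cantor_top X) \<and> U2 \<noteq> topspace (cantor_top X)"
  then have U1: "clopen_in X U1" "U1 \<noteq> {}" "U1 \<noteq> cantor_space X"
    and U2: "clopen_in X U2" "U2 \<noteq> {}" "U2 \<noteq> cantor_space X" by simp_all
  have X: "X \<noteq> {}" using assms(2) by auto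
  have "mres X U1 = mres X U2" if orbit: "same_orbit (HT X) U1 U2"
  proof -
    obtain g where "g \<in> HT X" "g ` U1 = U2" using orbit unfolding same_orbit_def by blast
    then show ?thesis using mres_image_HT[OF assms U1(1)] by metis
  qed
  moreover have "same_orbit (HT_comm X) U1 U2" if "mres X U1 = mres X U2"
    using same_orbit_HT_comm_if_mres_eq[OF assms U1 U2 that] .
  moreover have "same_orbit (HT X) U1 U2" if "same_orbit (HT_comm X) U1 U2"
    using that HT_comm_subset_HT[OF X assms(1)] unfolding same_orbit_def by blast
  ultimately show "same_orbit (HT X) U1 U2 \<longleftrightarrow> same_orbit (HT_comm X) U1 U2"
    and "same_orbit (HT_comm X) U1 U2 \<longleftrightarrow> mres X U1 = mres X U2" by blast+
qed

end
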